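(* Let $X$ be an FK-space containing $\phi$, and let $\overline{\phi}$ denote the closure of $\phi$ in $X$. If $Y$ is an FK-space with $\overline{\phi}\subseteq Y\subseteq X$, then $D_p^qF^+(Y)=D_p^qF^+(X)$.
   Context: An FK-space is a vector subspace of the space $w$ of all complex sequences with a complete metrizable locally convex topology in which coordinate functionals are continuous; $X'$ is its continuous dual. $\delta^j$ has $1$ in position $j$, $0$ elsewhere; $\phi=\operatorname{span}\{\delta^j\}$. $p(n)<q(n)$ are nonnegative integer sequences with $q(n)\to\infty$. For an FK-space $X\supseteq\phi$, $D_p^qF^+(X)=\{x\in w:\lim_n\frac{1}{q(n)-p(n)}\sum_{k=p(n)+1}^{q(n)}\sum_{j=1}^kx_jf(\delta^j)\text{ exists }\forall f\in X'\}$. *)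

theory Defs
  imports "HOL-Analysis.Analysis"
begin

(* Complex sequences (elements of w) are functions nat => complex, 0-based:
   the paper's coordinate x_j (j >= 1) is  x (j - 1). *)
type_synonym seq = "nat \<Rightarrow> complex"

definition sscale :: "complex \<Rightarrow> seq \<Rightarrow> seq" where
  "sscale c x = (\<lambda>i. c * x i)"

definition sadd :: "seq \<Rightarrow> seq \<Rightarrow> seq" where
  "sadd x y = (\<lambda>i. x i + y i)"

definition delta :: "nat \<Rightarrow> seq" where
  "delta j = (\<lambda>i. if i = j then 1 else 0)"

definition phi :: "seq set" where
  "phi = {(\<lambda>i. \<Sum>j\<in>F. c j * delta j i) | F c. finite F}"

definition seq_subspace :: "seq set \<Rightarrow> bool" where
  "seq_subspace X \<longleftrightarrow> (\<lambda>i. 0) \<in> X \<and> (\<forall>x\<in>X. \<forall>y\<in>X. sadd x y \<in> X)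
     \<and> (\<forall>c. \<forall>x\<in>X. sscale c x \<in> X)"

definition FK_space :: "seq set \<Rightarrow> seq topology \<Rightarrow> bool" where
  "FK_space X T \<longleftrightarrow>
     seq_subspace X \<and> topspace T = X \<and>
     continuous_map (prod_topology T T) T (\<lambda>(x, y). sadd x y) \<and>
     continuous_map (prod_topology euclidean T) T (\<lambda>(c, x). sscale c x) \<and>
     (\<forall>U. openin T U \<and> (\<lambda>i. 0) \<in> U \<longrightarrow>
        (\<exists>V. openin T V \<and> (\<lambda>i. 0) \<in> V \<and> V \<subseteq> U \<and>
             (\<forall>x\<in>V. \<forall>y\<in>V. \<forall>t::real. 0 \<le> t \<and> t \<le> 1 \<longrightarrow>
                 sadd (sscale (complex_of_real t) x) (sscale (complex_of_real (1 - t)) y) \<in> V))) \<and>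
     completely_metrizable_space T \<and>
     (\<forall>j. continuous_map T euclidean (\<lambda>x. x j))"

definition cdual :: "seq set \<Rightarrow> seq topology \<Rightarrow> (seq \<Rightarrow> complex) set" where
  "cdual X T = {f. (\<forall>x\<in>X. \<forall>y\<in>X. f (sadd x y) = f x + f y) \<and>
                   (\<forall>c. \<forall>x\<in>X. f (sscale c x) = c * f x) \<and>
                   continuous_map T euclidean f}"

(* D_p^q F^+(X); inner sum over paper-indices j = 1..k, i.e. 0-based j < k *)
definition DpqFplus :: "(nat \<Rightarrow> nat) \<Rightarrow> (nat \<Rightarrow> nat) \<Rightarrow> seq set \<Rightarrow> seq topology \<Rightarrow> seq set" where
  "DpqFplus p q X T = {x. \<forall>f\<in>cdual X T.
      convergent (\<lambda>n. (1 / of_nat (q n - p n)) *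
         (\<Sum>k\<in>{p n<..q n}. \<Sum>j<k. x j * f (delta j)))}"

end

theory Submission
  imports Defs "HOL-Library.Function_Algebras"
begin

(* Every f in X' restricts to an element of Y' with the same values on the unit vectors delta j,
   because the inclusion of one FK-space into another is continuous (closed graph theorem: a Baire
   category argument in Y combined with the completeness of X as a topological vector space).
   Hence D_p^q F^+(Y) is contained in D_p^q F^+(X).  Conversely, the closure of phi in X is a closed
   subspace of X, hence an FK-space contained in Y, so every g in Y' is continuous on it for the
   topology of X; by the Hahn-Banach theorem in the locally convex space X it extends to some f in
   X', which agrees with g on the unit vectors.  Hence D_p^q F^+(X) is contained in D_p^q F^+(Y). *)

section \<open>Hahn--Banach extension of dominated functionals\<close>

definition sublinear_on :: "(real \<Rightarrow> 'v::ab_group_add \<Rightarrow> 'v) \<Rightarrow> 'v set \<Rightarrow> ('v \<Rightarrow> real) \<Rightarrow> bool" where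
  "sublinear_on scal X p \<longleftrightarrow>
     (\<forall>x\<in>X. \<forall>y\<in>X. p (x + y) \<le> p x + p y) \<and> (\<forall>x\<in>X. \<forall>r>0. p (scal r x) = r * p x)"

definition linear_functional_on :: "('a::field \<Rightarrow> 'v::ab_group_add \<Rightarrow> 'v) \<Rightarrow> 'v set \<Rightarrow> ('v \<Rightarrow> 'a) \<Rightarrow> bool" where
  "linear_functional_on scal X f \<longleftrightarrow>
     (\<forall>x\<in>X. \<forall>y\<in>X. f (x + y) = f x + f y) \<and> (\<forall>c. \<forall>x\<in>X. f (scal c x) = c * f x)"

lemma linear_functional_on_subset:
  "linear_functional_on scal X f \<Longrightarrow> Y \<subseteq> X \<Longrightarrow> linear_functional_on scal Y f"
  unfolding linear_functional_on_def by blast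

text \<open>Partial linear functionals are handled through their graphs, so that the union of a chain
  of extensions is again one.\<close>

definition linear_graph :: "(real \<Rightarrow> 'v::ab_group_add \<Rightarrow> 'v) \<Rightarrow> ('v \<times> real) set \<Rightarrow> bool" where
  "linear_graph scal G \<longleftrightarrow>
     (\<forall>x a b. (x, a) \<in> G \<longrightarrow> (x, b) \<in> G \<longrightarrow> a = b) \<and>
     (\<forall>x a y b. (x, a) \<in> G \<longrightarrow> (y, b) \<in> G \<longrightarrow> (x + y, a + b) \<in> G) \<and>
     (\<forall>x a r. (x, a) \<in> G \<longrightarrow> (scal r x, r * a) \<in> G)"

definition dominated_graph ::
    "(real \<Rightarrow> 'v::ab_group_add \<Rightarrow> 'v) \<Rightarrow> 'v set \<Rightarrow> ('v \<Rightarrow> real) \<Rightarrow> ('v \<times> real) set \<Rightarrow> bool" where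
  "dominated_graph scal X p G \<longleftrightarrow>
     linear_graph scal G \<and> Domain G \<subseteq> X \<and> (\<forall>x a. (x, a) \<in> G \<longrightarrow> a \<le> p x)"

definition adjoin_graph ::
    "(real \<Rightarrow> 'v::ab_group_add \<Rightarrow> 'v) \<Rightarrow> ('v \<times> real) set \<Rightarrow> 'v \<Rightarrow> real \<Rightarrow> ('v \<times> real) set" where
  "adjoin_graph scal G x0 c = {(m + scal t x0, a + t * c) | m a t. (m, a) \<in> G}"

lemma linear_graphD:
  assumes "linear_graph scal G"
  shows linear_graph_unique: "(x, a) \<in> G \<Longrightarrow> (x, b) \<in> G \<Longrightarrow> a = b"
    and linear_graph_add: "(x, a) \<in> G \<Longrightarrow> (y, b) \<in> G \<Longrightarrow> (x + y, a + b) \<in> G"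
    and linear_graph_scale: "(x, a) \<in> G \<Longrightarrow> (scal r x, r * a) \<in> G"
  using assms unfolding linear_graph_def by blast+

lemma linear_graph_Union_chain:
  assumes "\<And>G. G \<in> C \<Longrightarrow> linear_graph scal G" "subset.chain A C"
  shows "linear_graph scal (\<Union>C)"
proof -
  have common: "\<exists>G\<in>C. u \<in> G \<and> v \<in> G" if "u \<in> \<Union>C" "v \<in> \<Union>C" for u v
    using that assms(2) unfolding subset_chain_def by blast
  show ?thesis
    unfolding linear_graph_def
  proof (intro conjI allI impI)
    fix x a b assume "(x, a) \<in> \<Union>C" "(x, b) \<in> \<Union>C"
    then obtain G where "G \<in> C" "(x, a) \<in> G" "(x, b) \<in> G" using common by blast
    then show "a = b" using assms(1) linear_graph_unique by blast
  next
    fix x a y b assume "(x, a) \<in> \<Union>C" "(y, b) \<in> \<Union>C"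
    then obtain G where "G \<in> C" "(x, a) \<in> G" "(y, b) \<in> G" using common by blast
    then show "(x + y, a + b) \<in> \<Union>C" using assms(1) linear_graph_add by blast
  next
    fix x a r assume "(x, a) \<in> \<Union>C"
    then obtain G where "G \<in> C" "(x, a) \<in> G" by blast
    then show "(scal r x, r * a) \<in> \<Union>C" using assms(1) linear_graph_scale by blast
  qed
qed

lemma dominated_graph_Union_chain:
  assumes "\<And>G. G \<in> C \<Longrightarrow> dominated_graph scal X p G" "subset.chain A C"
  shows "dominated_graph scal X p (\<Union>C)"
  using assms linear_graph_Union_chain[of C scal A]
  unfolding dominated_graph_def by (auto simp: Domain_Union)

lemma functional_of_linear_graph:
  assumes "linear_graph scal G" "Domain G = X"
  defines "F \<equiv> \<lambda>x. THE a. (x, a) \<in> G"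
  shows "linear_functional_on scal X F" "\<And>x a. (x, a) \<in> G \<Longrightarrow> F x = a"
proof -
  show F: "F x = a" if "(x, a) \<in> G" for x a
    unfolding F_def using that by (rule the_equality) (rule linear_graph_unique[OF assms(1) _ that])
  have FG: "(x, F x) \<in> G" if x: "x \<in> X" for x
  proof -
    obtain a where "(x, a) \<in> G" using x assms(2) by blast
    then show ?thesis using F by simp
  qed
  show "linear_functional_on scal X F"
    unfolding linear_functional_on_def
  proof (intro conjI ballI allI)
    fix x y assume "x \<in> X" "y \<in> X"
    then show "F (x + y) = F x + F y" by (intro F linear_graph_add[OF assms(1)] FG)
  next
    fix r x assume "x \<in> X"
    then show "F (scal r x) = r * F x" by (intro F linear_graph_scale[OF assms(1)] FG)
  qed
qed

context
  fixes scal :: "real \<Rightarrow> 'v::ab_group_add \<Rightarrow> 'v"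
  assumes vs: "vector_space scal"
begin

interpretation vector_space scal by (rule vs)

lemma linear_graph_of_functional:
  assumes "subspace M" "linear_functional_on scal M h"
  shows "linear_graph scal ((\<lambda>x. (x, h x)) ` M)"
  using assms subspace_add[OF assms(1)] subspace_scale[OF assms(1)]
  unfolding linear_graph_def linear_functional_on_def by auto

lemma linear_graph_adjoin:
  assumes G: "linear_graph scal G" and x0: "x0 \<notin> Domain G"
  shows "linear_graph scal (adjoin_graph scal G x0 c)"
  unfolding linear_graph_def
proof (intro conjI allI impI)
  note Gadd = linear_graph_add[OF G] and Gscale = linear_graph_scale[OF G]
  have in_adjoin: "(m + scal t x0, a + t * c) \<in> adjoin_graph scal G x0 c" if "(m, a) \<in> G" for m a t
    using that unfolding adjoin_graph_def by blast
  fix x a b assume "(x, a) \<in> adjoin_graph scal G x0 c" "(x, b) \<in> adjoin_graph scal G x0 c"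
  then obtain m1 a1 t1 m2 a2 t2 where A: "(m1, a1) \<in> G" "(m2, a2) \<in> G"
    "x = m1 + scal t1 x0" "a = a1 + t1 * c" "x = m2 + scal t2 x0" "b = a2 + t2 * c"
    unfolding adjoin_graph_def by blast
  have t: "t1 = t2"
  proof (rule ccontr)
    assume "t1 \<noteq> t2"
    have "x0 = scal (1 / (t1 - t2)) (scal (t1 - t2) x0)" using \<open>t1 \<noteq> t2\<close> by simp
    also have "scal (t1 - t2) x0 = m2 - m1" using A(3,5) by (simp add: algebra_simps)
    finally have "x0 = scal (1 / (t1 - t2)) (m2 - m1)" .
    moreover have "(m2 - m1, a2 - a1) \<in> G" using Gadd[OF A(2) Gscale[OF A(1), of "-1"]] by simp
    ultimately have "(x0, (1 / (t1 - t2)) * (a2 - a1)) \<in> G" using Gscale by metis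
    with x0 show False by (simp add: Domain.DomainI)
  qed
  then show "a = b" using A linear_graph_unique[OF G] by simp
next
  fix x a y b
  assume "(x, a) \<in> adjoin_graph scal G x0 c" "(y, b) \<in> adjoin_graph scal G x0 c"
  then obtain m1 a1 t1 m2 a2 t2 where A: "(m1, a1) \<in> G" "(m2, a2) \<in> G"
    "x = m1 + scal t1 x0" "a = a1 + t1 * c" "y = m2 + scal t2 x0" "b = a2 + t2 * c"
    unfolding adjoin_graph_def by blast
  have "x + y = (m1 + m2) + scal (t1 + t2) x0" "a + b = (a1 + a2) + (t1 + t2) * c"
    using A by (simp_all add: algebra_simps)
  then show "(x + y, a + b) \<in> adjoin_graph scal G x0 c"
    using linear_graph_add[OF G A(1,2)] unfolding adjoin_graph_def by blast
next
  fix x a r assume "(x, a) \<in> adjoin_graph scal G x0 c"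
  then obtain m a0 t where A: "(m, a0) \<in> G" "x = m + scal t x0" "a = a0 + t * c"
    unfolding adjoin_graph_def by blast
  have "scal r x = scal r m + scal (r * t) x0" "r * a = r * a0 + (r * t) * c"
    using A by (simp_all add: algebra_simps)
  then show "(scal r x, r * a) \<in> adjoin_graph scal G x0 c"
    using linear_graph_scale[OF G A(1)] unfolding adjoin_graph_def by blast
qed

lemma adjoin_graph_extends:
  assumes "linear_graph scal G" "G \<noteq> {}"
  shows "G \<subseteq> adjoin_graph scal G x0 c" "(x0, c) \<in> adjoin_graph scal G x0 c"
proof -
  show "G \<subseteq> adjoin_graph scal G x0 c"
  proof clarify
    fix m a assume "(m, a) \<in> G"
    then have "(m + scal 0 x0, a + 0 * c) \<in> adjoin_graph scal G x0 c" unfolding adjoin_graph_def by blast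
    then show "(m, a) \<in> adjoin_graph scal G x0 c" by simp
  qed
  obtain x a where "(x, a) \<in> G" using assms(2) by auto
  from linear_graph_scale[OF assms(1) this, of 0] have "(0, 0) \<in> G" by simp
  then have "(0 + scal 1 x0, 0 + 1 * c) \<in> adjoin_graph scal G x0 c" unfolding adjoin_graph_def by blast
  then show "(x0, c) \<in> adjoin_graph scal G x0 c" by simp
qed

end

context
  fixes scal :: "real \<Rightarrow> 'v::ab_group_add \<Rightarrow> 'v" and X :: "'v set" and p :: "'v \<Rightarrow> real"
  assumes vs: "vector_space scal" and X: "module.subspace scal X" and p: "sublinear_on scal X p"
begin

interpretation vector_space scal by (rule vs)

lemma sublinear_on_add: "x \<in> X \<Longrightarrow> y \<in> X \<Longrightarrow> p (x + y) \<le> p x + p y"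
  and sublinear_on_scale: "x \<in> X \<Longrightarrow> r > 0 \<Longrightarrow> p (scal r x) = r * p x"
  using p unfolding sublinear_on_def by blast+

lemma dominated_extension_value:
  assumes G: "dominated_graph scal X p G" "G \<noteq> {}" and x0: "x0 \<in> X"
  obtains c where "\<And>m a. (m, a) \<in> G \<Longrightarrow> a - p (m - x0) \<le> c \<and> c \<le> p (m + x0) - a"
proof -
  have key: "a - p (m - x0) \<le> p (m' + x0) - a'" if "(m, a) \<in> G" "(m', a') \<in> G" for m a m' a'
  proof -
    have "m \<in> X" "m' \<in> X" using that G(1) by (auto simp: dominated_graph_def)
    have "a + a' \<le> p (m + m')"
      using G(1) linear_graph_add[OF _ that] by (auto simp: dominated_graph_def)
    also have "m + m' = (m - x0) + (m' + x0)" by (simp add: algebra_simps)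
    also have "p \<dots> \<le> p (m - x0) + p (m' + x0)"
      by (intro sublinear_on_add subspace_diff subspace_add X x0 \<open>m \<in> X\<close> \<open>m' \<in> X\<close>)
    finally show ?thesis by simp
  qed
  define L where "L = (\<lambda>(m, a). a - p (m - x0)) ` G"
  have ub: "l \<le> p (m' + x0) - a'" if "l \<in> L" "(m', a') \<in> G" for l m' a'
    using key[OF _ that(2)] that(1) by (auto simp: L_def)
  obtain m' a' where "(m', a') \<in> G" using G(2) by auto
  then have bdd: "bdd_above L" using ub unfolding bdd_above_def by blast
  have "a - p (m - x0) \<le> Sup L" if "(m, a) \<in> G" for m a
    using that by (intro cSup_upper[OF _ bdd]) (force simp: L_def)
  moreover have "Sup L \<le> p (m + x0) - a" if "(m, a) \<in> G" for m a
    using that G(2) ub by (intro cSup_least) (auto simp: L_def)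
  ultimately show ?thesis using that by blast
qed

lemma dominated_graph_adjoin:
  assumes G: "dominated_graph scal X p G" and x0: "x0 \<in> X" "x0 \<notin> Domain G"
    and c: "\<And>m a. (m, a) \<in> G \<Longrightarrow> a - p (m - x0) \<le> c \<and> c \<le> p (m + x0) - a"
  shows "dominated_graph scal X p (adjoin_graph scal G x0 c)"
  unfolding dominated_graph_def
proof (intro conjI allI impI)
  have lin: "linear_graph scal G" and dom: "Domain G \<subseteq> X" and le: "\<And>x a. (x, a) \<in> G \<Longrightarrow> a \<le> p x"
    using G by (auto simp: dominated_graph_def)
  show "linear_graph scal (adjoin_graph scal G x0 c)" using linear_graph_adjoin[OF vs lin x0(2)] .
  show "Domain (adjoin_graph scal G x0 c) \<subseteq> X"
    using dom subspace_add[OF X _ subspace_scale[OF X x0(1)]] by (force simp: adjoin_graph_def)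
  fix x a assume "(x, a) \<in> adjoin_graph scal G x0 c"
  then obtain m a0 t where A: "(m, a0) \<in> G" "x = m + scal t x0" "a = a0 + t * c"
    unfolding adjoin_graph_def by blast
  have mX: "m \<in> X" using A(1) dom by auto
  consider "t = 0" | "t > 0" | "t < 0" by linarith
  then show "a \<le> p x"
  proof cases
    case 1
    then show ?thesis using A le by auto
  next
    case 2
    have "(scal (1 / t) m, a0 / t) \<in> G" using linear_graph_scale[OF lin A(1), of "1 / t"] by simp
    then have "t * c \<le> t * (p (scal (1 / t) m + x0) - a0 / t)"
      using c 2 by (intro mult_left_mono) auto
    also have "\<dots> = p (scal t (scal (1 / t) m + x0)) - a0"
      using 2 mX x0(1) X by (simp add: sublinear_on_scale subspace_add subspace_scale right_diff_distrib)
    also have "scal t (scal (1 / t) m + x0) = x" using 2 A(2) by (simp add: scale_right_distrib)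
    finally show ?thesis using A(3) by simp
  next
    case 3
    define y where "y = scal (- 1 / t) m - x0"
    have yX: "y \<in> X" unfolding y_def by (intro subspace_diff subspace_scale X mX x0(1))
    have "(scal (- 1 / t) m, - a0 / t) \<in> G" using linear_graph_scale[OF lin A(1), of "- 1 / t"] by simp
    then have "- t * (- a0 / t - p y) \<le> - t * c"
      using c 3 unfolding y_def by (intro mult_left_mono) auto
    moreover have "- t * (- a0 / t) = a0" using 3 by simp
    moreover have "- t * p y = p x"
      using sublinear_on_scale[OF yX, of "- t"] 3 A(2) by (simp add: y_def scale_right_diff_distrib)
    ultimately show ?thesis using A(3) by (simp add: right_diff_distrib)
  qed
qed

lemma exists_total_dominated_graph:
  assumes H: "dominated_graph scal X p H" "H \<noteq> {}"
  obtains G where "dominated_graph scal X p G" "H \<subseteq> G" "Domain G = X"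
proof -
  define A where "A = {G. dominated_graph scal X p G \<and> H \<subseteq> G}"
  have "\<exists>U\<in>A. \<forall>G\<in>C. G \<subseteq> U" if C: "subset.chain A C" for C
  proof (cases "C = {}")
    case True
    then show ?thesis using H by (auto simp: A_def)
  next
    case False
    have CA: "\<And>G. G \<in> C \<Longrightarrow> dominated_graph scal X p G" "\<And>G. G \<in> C \<Longrightarrow> H \<subseteq> G"
      using C by (auto simp: subset_chain_def A_def)
    have "dominated_graph scal X p (\<Union>C)" using dominated_graph_Union_chain[OF CA(1) C] .
    moreover obtain G0 where "G0 \<in> C" using False by blast
    then have "H \<subseteq> \<Union>C" using CA(2) by blast
    ultimately have "\<Union>C \<in> A" by (simp add: A_def)
    then show ?thesis by blast
  qed
  from subset_Zorn[OF this] obtain G where G: "G \<in> A" and maximal: "\<forall>G'\<in>A. G \<subseteq> G' \<longrightarrow> G' = G"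
    by blast
  have "x \<in> Domain G" if x: "x \<in> X" for x
  proof (rule ccontr)
    assume x': "x \<notin> Domain G"
    have G_dom: "dominated_graph scal X p G" and "H \<subseteq> G" using G by (simp_all add: A_def)
    then have "G \<noteq> {}" using H(2) by blast
    then obtain c where c: "\<And>m a. (m, a) \<in> G \<Longrightarrow> a - p (m - x) \<le> c \<and> c \<le> p (m + x) - a"
      using dominated_extension_value[OF G_dom _ x] by blast
    have lin: "linear_graph scal G" using G_dom by (simp add: dominated_graph_def)
    have G_sub: "G \<subseteq> adjoin_graph scal G x c" by (rule adjoin_graph_extends(1)[OF vs lin \<open>G \<noteq> {}\<close>])
    then have "adjoin_graph scal G x c \<in> A"
      using dominated_graph_adjoin[OF G_dom x x' c] \<open>H \<subseteq> G\<close> by (auto simp: A_def)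
    then have "adjoin_graph scal G x c = G" using maximal G_sub by blast
    then show False using adjoin_graph_extends(2)[OF vs lin \<open>G \<noteq> {}\<close>, of x c] x' by auto
  qed
  moreover have "Domain G \<subseteq> X" using G by (simp add: A_def dominated_graph_def)
  ultimately have "Domain G = X" by blast
  with G show ?thesis using that unfolding A_def by blast
qed

theorem hahn_banach_sublinear:
  assumes M: "subspace M" "M \<subseteq> X" and h: "linear_functional_on scal M h" "\<forall>x\<in>M. h x \<le> p x"
  obtains F where "linear_functional_on scal X F" "\<forall>x\<in>X. F x \<le> p x" "\<forall>x\<in>M. F x = h x"
proof -
  define H where "H = (\<lambda>x. (x, h x)) ` M"
  have "dominated_graph scal X p H"
    using linear_graph_of_functional[OF vs M(1) h(1)] M(2) h(2) by (auto simp: dominated_graph_def H_def)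
  moreover have "H \<noteq> {}" using subspace_0[OF M(1)] by (auto simp: H_def)
  ultimately obtain G where G: "dominated_graph scal X p G" "H \<subseteq> G" "Domain G = X"
    by (rule exists_total_dominated_graph)
  define F where "F x = (THE a. (x, a) \<in> G)" for x
  have lin: "linear_graph scal G" using G(1) by (simp add: dominated_graph_def)
  note F = functional_of_linear_graph[OF lin G(3), folded F_def]
  have "\<forall>x\<in>X. F x \<le> p x" using G(1,3) F(2) by (force simp: dominated_graph_def)
  moreover have "\<forall>x\<in>M. F x = h x" using F(2) G(2) by (auto simp: H_def)
  ultimately show ?thesis using that F(1) by blast
qed

end

section \<open>Topological vector spaces of sequences\<close>

lemma sscale_apply [simp]: "sscale c x i = c * x i"
  by (simp add: sscale_def)

lemma sadd_eq_plus: "sadd x y = x + y"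
  by (simp add: sadd_def plus_fun_def)

lemma sscale_zero_left [simp]: "sscale 0 x = 0"
  and sscale_zero_right [simp]: "sscale c 0 = 0"
  and sscale_one [simp]: "sscale 1 x = x"
  and sscale_sscale [simp]: "sscale c (sscale d x) = sscale (c * d) x"
  and sscale_add_right: "sscale c (x + y) = sscale c x + sscale c y"
  and sscale_minus_one [simp]: "sscale (- 1) x = - x"
  by (auto simp: fun_eq_iff algebra_simps)

abbreviation rscale :: "real \<Rightarrow> seq \<Rightarrow> seq" where
  "rscale r \<equiv> sscale (complex_of_real r)"

lemma vector_space_rscale: "vector_space rscale"
  by unfold_locales (auto simp: fun_eq_iff algebra_simps)

lemma seq_subspace_iff:
  "seq_subspace S \<longleftrightarrow> 0 \<in> S \<and> (\<forall>x\<in>S. \<forall>y\<in>S. x + y \<in> S) \<and> (\<forall>c. \<forall>x\<in>S. sscale c x \<in> S)"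
  by (simp add: seq_subspace_def sadd_eq_plus zero_fun_def)

lemma seq_subspaceD:
  assumes "seq_subspace S"
  shows seq_subspace_zero: "0 \<in> S"
    and seq_subspace_add: "x \<in> S \<Longrightarrow> y \<in> S \<Longrightarrow> x + y \<in> S"
    and seq_subspace_scale: "x \<in> S \<Longrightarrow> sscale c x \<in> S"
  using assms by (simp_all add: seq_subspace_iff)

locale seq_tvs =
  fixes X :: "seq set" and T :: "seq topology"
  assumes topspace: "topspace T = X"
    and subspace: "seq_subspace X"
    and continuous_add: "continuous_map (prod_topology T T) T (\<lambda>(x, y). x + y)"
    and continuous_scale: "continuous_map (prod_topology euclidean T) T (\<lambda>(c, x). sscale c x)"
begin

lemmas zero_mem = seq_subspace_zero[OF subspace]
  and add_mem = seq_subspace_add[OF subspace]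
  and scale_mem = seq_subspace_scale[OF subspace]

lemma neg_mem: "x \<in> X \<Longrightarrow> - x \<in> X"
  using scale_mem[of x "- 1"] by simp

lemma diff_mem: "x \<in> X \<Longrightarrow> y \<in> X \<Longrightarrow> x - y \<in> X"
  using add_mem[OF _ neg_mem] by simp

lemma openin_preimage: "continuous_map T T h \<Longrightarrow> openin T U \<Longrightarrow> openin T {x \<in> X. h x \<in> U}"
  using openin_continuous_map_preimage[of T T h U] topspace by simp

lemma continuous_map_scale: "continuous_map T T (sscale c)"
proof -
  have "continuous_map T (prod_topology euclidean T) (\<lambda>x. (c, x))"
    by (simp add: continuous_map_pairwise o_def)
  from continuous_map_compose[OF this continuous_scale] show ?thesis by (simp add: o_def)
qed

lemma continuous_map_scale_vector: "x \<in> X \<Longrightarrow> continuous_map euclidean T (\<lambda>c. sscale c x)"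
proof -
  assume "x \<in> X"
  then have "continuous_map euclidean (prod_topology euclidean T) (\<lambda>c. (c, x))"
    by (simp add: continuous_map_pairwise o_def topspace)
  from continuous_map_compose[OF this continuous_scale] show ?thesis by (simp add: o_def)
qed

lemma continuous_map_neg: "continuous_map T T uminus"
proof -
  have "sscale (- 1) = uminus" by (simp add: fun_eq_iff)
  then show ?thesis using continuous_map_scale[of "- 1"] by simp
qed

lemma continuous_map_translate: "a \<in> X \<Longrightarrow> continuous_map T T (\<lambda>x. a + x)"
proof -
  assume "a \<in> X"
  then have "continuous_map T (prod_topology T T) (\<lambda>x. (a, x))"
    by (simp add: continuous_map_pairwise o_def topspace)
  from continuous_map_compose[OF this continuous_add] show ?thesis by (simp add: o_def)
qed

lemma continuous_map_diff_left: "a \<in> X \<Longrightarrow> continuous_map T T (\<lambda>x. a - x)"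
  using continuous_map_compose[OF continuous_map_neg continuous_map_translate] by (simp add: o_def)

lemma continuous_map_diff_right: "a \<in> X \<Longrightarrow> continuous_map T T (\<lambda>x. x - a)"
  using continuous_map_translate[OF neg_mem] by (simp add: add.commute)

lemma add_nbhds:
  assumes "openin T U" "x \<in> X" "y \<in> X" "x + y \<in> U"
  obtains A B where "openin T A" "openin T B" "x \<in> A" "y \<in> B" "\<And>a b. a \<in> A \<Longrightarrow> b \<in> B \<Longrightarrow> a + b \<in> U"
proof -
  define P where "P = {z \<in> topspace (prod_topology T T). (\<lambda>(x, y). x + y) z \<in> U}"
  have "openin (prod_topology T T) P"
    unfolding P_def by (rule openin_continuous_map_preimage[OF continuous_add assms(1)])
  moreover have "(x, y) \<in> P" using assms topspace by (simp add: P_def)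
  ultimately obtain A B where "openin T A" "openin T B" "x \<in> A" "y \<in> B" "A \<times> B \<subseteq> P"
    by (metis openin_prod_topology_alt)
  then show ?thesis using that by (force simp: P_def)
qed

lemma diff_nbhds:
  assumes "openin T U" "x \<in> X" "y \<in> X" "x - y \<in> U"
  obtains A B where "openin T A" "openin T B" "x \<in> A" "y \<in> B" "\<And>a b. a \<in> A \<Longrightarrow> b \<in> B \<Longrightarrow> a - b \<in> U"
proof -
  obtain A B where AB: "openin T A" "openin T B" "x \<in> A" "- y \<in> B"
    and sum: "\<And>a b. a \<in> A \<Longrightarrow> b \<in> B \<Longrightarrow> a + b \<in> U"
    using add_nbhds[OF assms(1,2) neg_mem[OF assms(3)]] assms(4) by auto
  have "openin T {z \<in> X. - z \<in> B}" by (rule openin_preimage[OF continuous_map_neg AB(2)])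
  moreover have "y \<in> {z \<in> X. - z \<in> B}" using AB(4) assms(3) by simp
  moreover have "a - b \<in> U" if "a \<in> A" "b \<in> {z \<in> X. - z \<in> B}" for a b
    using sum[of a "- b"] that by simp
  ultimately show ?thesis using that AB(1,3) by blast
qed

lemma half_nbhd:
  assumes "openin T E" "0 \<in> E"
  obtains E' where "openin T E'" "0 \<in> E'" "E' \<subseteq> E" "\<And>u v. u \<in> E' \<Longrightarrow> v \<in> E' \<Longrightarrow> u + v \<in> E"
proof -
  obtain A B where "openin T A" "openin T B" "0 \<in> A" "0 \<in> B"
    and sum: "\<And>a b. a \<in> A \<Longrightarrow> b \<in> B \<Longrightarrow> a + b \<in> E"
    using add_nbhds[OF assms(1) zero_mem zero_mem] assms(2) by auto
  then show ?thesis using that[of "A \<inter> B \<inter> E"] assms by blast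
qed

lemma absorbing:
  assumes "x \<in> X" "openin T U" "0 \<in> U"
  obtains e where "e > 0" "\<And>c. cmod c < e \<Longrightarrow> sscale c x \<in> U"
proof -
  have "open {c. sscale c x \<in> U}"
    using openin_continuous_map_preimage[OF continuous_map_scale_vector[OF assms(1)] assms(2)] by simp
  moreover have "0 \<in> {c. sscale c x \<in> U}" using assms by simp
  ultimately obtain e where "e > 0" "ball 0 e \<subseteq> {c. sscale c x \<in> U}"
    using open_contains_ball by blast
  then show ?thesis using that by (auto simp: subset_iff dist_norm)
qed

lemma seq_subspace_closure:
  assumes S: "seq_subspace S" "S \<subseteq> X"
  shows "seq_subspace (T closure_of S)"
  unfolding seq_subspace_iff
proof (intro conjI ballI allI)
  show "0 \<in> T closure_of S"
    using closure_of_subset[of S T] S topspace seq_subspace_zero by blast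
next
  fix x y assume "x \<in> T closure_of S" "y \<in> T closure_of S"
  then have "(x, y) \<in> prod_topology T T closure_of (S \<times> S)" by (simp add: closure_of_Times)
  then have "x + y \<in> T closure_of ((\<lambda>(x, y). x + y) ` (S \<times> S))"
    using continuous_map_image_closure_subset[OF continuous_add] by fastforce
  moreover have "(\<lambda>(x, y). x + y) ` (S \<times> S) \<subseteq> S" using seq_subspace_add[OF S(1)] by auto
  ultimately show "x + y \<in> T closure_of S" using closure_of_mono by blast
next
  fix c x assume "x \<in> T closure_of S"
  then have "sscale c x \<in> T closure_of (sscale c ` S)"
    using continuous_map_image_closure_subset[OF continuous_map_scale] by blast
  moreover have "sscale c ` S \<subseteq> S" using seq_subspace_scale[OF S(1)] by auto
  ultimately show "sscale c x \<in> T closure_of S" using closure_of_mono by blast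
qed

lemma seq_tvs_subtopology:
  assumes S: "seq_subspace S" "S \<subseteq> X"
  shows "seq_tvs S (subtopology T S)"
proof
  show "topspace (subtopology T S) = S" using S(2) topspace by auto
  show "seq_subspace S" by (rule S(1))
  have "(\<lambda>(x, y). x + y) \<in> topspace (subtopology (prod_topology T T) (S \<times> S)) \<rightarrow> S"
    using seq_subspace_add[OF S(1)] by auto
  then show "continuous_map (prod_topology (subtopology T S) (subtopology T S)) (subtopology T S)
      (\<lambda>(x, y). x + y)"
    unfolding subtopology_Times[symmetric]
    by (rule continuous_map_into_subtopology[OF continuous_map_from_subtopology[OF continuous_add]])
  have eq: "subtopology (prod_topology euclidean T) (UNIV \<times> S) = prod_topology euclidean (subtopology T S)"
    using subtopology_Times[of euclidean T UNIV S] by simp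
  have "(\<lambda>(c, x). sscale c x) \<in> topspace (subtopology (prod_topology euclidean T) (UNIV \<times> S)) \<rightarrow> S"
    using seq_subspace_scale[OF S(1)] by auto
  then have "continuous_map (subtopology (prod_topology euclidean T) (UNIV \<times> S)) (subtopology T S)
      (\<lambda>(c, x). sscale c x)"
    by (rule continuous_map_into_subtopology[OF continuous_map_from_subtopology[OF continuous_scale]])
  then show "continuous_map (prod_topology euclidean (subtopology T S)) (subtopology T S)
      (\<lambda>(c, x). sscale c x)"
    by (simp only: eq)
qed

end

section \<open>Extension of continuous functionals in locally convex spaces\<close>

definition convex_seq :: "seq set \<Rightarrow> bool" where
  "convex_seq V \<longleftrightarrow> (\<forall>x\<in>V. \<forall>y\<in>V. \<forall>t. 0 \<le> t \<and> t \<le> 1 \<longrightarrow> rscale t x + rscale (1 - t) y \<in> V)"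

definition locally_convex :: "seq topology \<Rightarrow> bool" where
  "locally_convex T \<longleftrightarrow>
     (\<forall>U. openin T U \<and> 0 \<in> U \<longrightarrow> (\<exists>V. openin T V \<and> 0 \<in> V \<and> V \<subseteq> U \<and> convex_seq V))"

definition minkowski_functional :: "seq set \<Rightarrow> seq \<Rightarrow> real" where
  "minkowski_functional V x = Inf {t. 0 < t \<and> rscale (1 / t) x \<in> V}"

lemma rscale_rscale: "rscale a (rscale b x) = rscale (a * b) x"
  by simp

lemma minkowski_functional_le:
  assumes "0 < t" "rscale (1 / t) x \<in> V"
  shows "minkowski_functional V x \<le> t"
  unfolding minkowski_functional_def using assms
  by (intro cInf_lower) (auto intro: bdd_belowI[of _ 0])

lemma minkowski_functional_ge:
  assumes "\<exists>t>0. rscale (1 / t) x \<in> V" "\<And>t. 0 < t \<Longrightarrow> rscale (1 / t) x \<in> V \<Longrightarrow> b \<le> t"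
  shows "b \<le> minkowski_functional V x"
  unfolding minkowski_functional_def using assms by (intro cInf_greatest) auto

lemma sublinear_minkowski_functional:
  assumes X: "seq_subspace X" and V: "convex_seq V"
    and absorbing: "\<And>x. x \<in> X \<Longrightarrow> \<exists>t>0. rscale (1 / t) x \<in> V"
  shows "sublinear_on rscale X (minkowski_functional V)"
  unfolding sublinear_on_def
proof (intro conjI ballI allI impI)
  fix x y assume xy: "x \<in> X" "y \<in> X"
  have "minkowski_functional V (x + y) \<le> s + t"
    if st: "0 < s" "rscale (1 / s) x \<in> V" "0 < t" "rscale (1 / t) y \<in> V" for s t
  proof -
    define l where "l = s / (s + t)"
    have l: "0 \<le> l" "l \<le> 1" "l * (1 / s) = 1 / (s + t)" "(1 - l) * (1 / t) = 1 / (s + t)"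
      using st by (auto simp: l_def field_simps)
    have "rscale l (rscale (1 / s) x) + rscale (1 - l) (rscale (1 / t) y) \<in> V"
      using V st(2,4) l(1,2) unfolding convex_seq_def by blast
    then have "rscale (1 / (s + t)) (x + y) \<in> V"
      by (simp only: rscale_rscale l(3,4) sscale_add_right)
    then show ?thesis using st by (intro minkowski_functional_le) auto
  qed
  then have "minkowski_functional V (x + y) - t \<le> minkowski_functional V x"
    if "0 < t" "rscale (1 / t) y \<in> V" for t
    using that absorbing[OF xy(1)] by (intro minkowski_functional_ge) (auto simp: algebra_simps)
  then have "minkowski_functional V (x + y) - minkowski_functional V x \<le> minkowski_functional V y"
    using absorbing[OF xy(2)] by (intro minkowski_functional_ge) (auto simp: algebra_simps)
  then show "minkowski_functional V (x + y) \<le> minkowski_functional V x + minkowski_functional V y"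
    by simp
next
  fix x and r :: real assume x: "x \<in> X" and r: "0 < r"
  have rx: "rscale r x \<in> X" using seq_subspace_scale[OF X x] .
  have "minkowski_functional V (rscale r x) \<le> r * t" if "0 < t" "rscale (1 / t) x \<in> V" for t
  proof -
    have "rscale (1 / (r * t)) (rscale r x) = rscale (1 / t) x" using r by (simp only: rscale_rscale) simp
    then show ?thesis using that r by (intro minkowski_functional_le) auto
  qed
  then have "minkowski_functional V (rscale r x) / r \<le> minkowski_functional V x"
    using absorbing[OF x] r by (intro minkowski_functional_ge) (auto simp: divide_le_eq mult.commute)
  moreover have "minkowski_functional V x \<le> t / r" if "0 < t" "rscale (1 / t) (rscale r x) \<in> V" for t
  proof -
    have "rscale (1 / (t / r)) x = rscale (1 / t) (rscale r x)" using r by (simp only: rscale_rscale) simp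
    then show ?thesis using that r by (intro minkowski_functional_le) auto
  qed
  then have "r * minkowski_functional V x \<le> minkowski_functional V (rscale r x)"
    using absorbing[OF rx] r by (intro minkowski_functional_ge) (auto simp: le_divide_eq mult.commute)
  ultimately show "minkowski_functional V (rscale r x) = r * minkowski_functional V x"
    using r by (simp add: divide_le_eq mult.commute)
qed

lemma cdual_iff: "f \<in> cdual X T \<longleftrightarrow> linear_functional_on sscale X f \<and> continuous_map T euclidean f"
  by (simp add: cdual_def linear_functional_on_def sadd_eq_plus)

lemma seq_subspace_rscale_subspace: "seq_subspace X \<Longrightarrow> module.subspace rscale X"
proof -
  assume X: "seq_subspace X"
  interpret vector_space rscale by (rule vector_space_rscale)
  show ?thesis by (intro subspaceI seq_subspaceD[OF X])
qed

definition complexify :: "(seq \<Rightarrow> real) \<Rightarrow> seq \<Rightarrow> complex" where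
  "complexify F x = complex_of_real (F x) - \<i> * complex_of_real (F (sscale \<i> x))"

lemma linear_functional_complexify:
  assumes X: "seq_subspace X" and F: "linear_functional_on rscale X F"
  shows "linear_functional_on sscale X (complexify F)"
proof -
  have Fadd: "F (x + y) = F x + F y" and Fscale: "F (rscale r x) = r * F x"
    if "x \<in> X" "y \<in> X" for x y r
    using F that unfolding linear_functional_on_def by blast+
  have cz: "c * z = complex_of_real (Re c) * z + complex_of_real (Im c) * (\<i> * z)" for c z :: complex
    by (subst complex_eq[of c]) (simp add: algebra_simps)
  have scale_split: "sscale c x = rscale (Re c) x + rscale (Im c) (sscale \<i> x)" for c x
    unfolding fun_eq_iff sscale_apply plus_fun_apply by (intro allI cz)
  have Fc: "F (sscale c x) = Re c * F x + Im c * F (sscale \<i> x)" if x: "x \<in> X" for c x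
  proof -
    have "F (sscale c x) = F (rscale (Re c) x + rscale (Im c) (sscale \<i> x))"
      by (subst scale_split) (rule refl)
    also have "\<dots> = F (rscale (Re c) x) + F (rscale (Im c) (sscale \<i> x))"
      using x X by (intro Fadd seq_subspace_scale)
    also have "\<dots> = Re c * F x + Im c * F (sscale \<i> x)"
      using x X by (simp only: Fscale seq_subspace_scale)
    finally show ?thesis .
  qed
  show ?thesis
    unfolding linear_functional_on_def
  proof (intro conjI ballI allI)
    fix x y assume "x \<in> X" "y \<in> X"
    then have "F (x + y) = F x + F y" "F (sscale \<i> (x + y)) = F (sscale \<i> x) + F (sscale \<i> y)"
      using X by (simp_all add: sscale_add_right Fadd seq_subspace_scale)
    then show "complexify F (x + y) = complexify F x + complexify F y"
      by (simp add: complexify_def ring_distribs)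
  next
    fix c x assume x: "x \<in> X"
    have "F (sscale \<i> (sscale c x)) = - Im c * F x + Re c * F (sscale \<i> x)"
      using Fc[OF x, of "\<i> * c"] by (simp add: mult.commute)
    then show "complexify F (sscale c x) = c * complexify F x"
      using Fc[OF x, of c] by (simp add: complexify_def complex_eq_iff algebra_simps)
  qed
qed

lemma linear_functional_Re:
  "linear_functional_on sscale M g \<Longrightarrow> linear_functional_on rscale M (\<lambda>x. Re (g x))"
  unfolding linear_functional_on_def by simp

lemma complexify_Re_eq:
  assumes M: "seq_subspace M" and g: "linear_functional_on sscale M g"
    and F: "\<forall>x\<in>M. F x = Re (g x)" and x: "x \<in> M"
  shows "complexify F x = g x"
proof -
  have "g (sscale \<i> x) = \<i> * g x" using g x unfolding linear_functional_on_def by blast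
  then have "F (sscale \<i> x) = - Im (g x)" using F seq_subspace_scale[OF M x] by simp
  then show ?thesis using F x by (simp add: complexify_def complex_eq_iff)
qed

lemma Re_le_minkowski_functional:
  assumes M: "seq_subspace M" and g: "linear_functional_on sscale M g"
    and V: "\<And>v. v \<in> V \<Longrightarrow> v \<in> M \<Longrightarrow> cmod (g v) < 1"
    and x: "x \<in> M" "\<exists>t>0. rscale (1 / t) x \<in> V"
  shows "Re (g x) \<le> minkowski_functional V x"
proof (rule minkowski_functional_ge[OF x(2)])
  fix t :: real assume t: "0 < t" "rscale (1 / t) x \<in> V"
  have "g (rscale (1 / t) x) = g x / t" using g x(1) unfolding linear_functional_on_def by simp
  moreover have "cmod (g (rscale (1 / t) x)) < 1" using V t(2) seq_subspace_scale[OF M x(1)] by blast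
  ultimately have "cmod (g x) / t < 1" using t(1) by (simp add: norm_divide)
  then have "cmod (g x) < t" using t(1) by (simp add: divide_less_eq)
  then show "Re (g x) \<le> t" using complex_Re_le_cmod[of "g x"] by linarith
qed

context seq_tvs
begin

lemma continuous_map_complexify:
  assumes F: "continuous_map T euclideanreal F"
  shows "continuous_map T euclidean (complexify F)"
proof -
  have Fi: "continuous_map T euclideanreal (\<lambda>x. F (sscale \<i> x))"
    using continuous_map_compose[OF continuous_map_scale F] by (simp add: o_def)
  show ?thesis
    unfolding continuous_map_atin complexify_def limitin_canonical_iff
  proof
    fix x assume "x \<in> topspace T"
    then have "(F \<longlongrightarrow> F x) (atin T x)" "((\<lambda>x. F (sscale \<i> x)) \<longlongrightarrow> F (sscale \<i> x)) (atin T x)"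
      using F Fi unfolding continuous_map_atin limitin_canonical_iff by blast+
    then show "((\<lambda>x. complex_of_real (F x) - \<i> * complex_of_real (F (sscale \<i> x))) \<longlongrightarrow>
        complex_of_real (F x) - \<i> * complex_of_real (F (sscale \<i> x))) (atin T x)"
      by (intro tendsto_diff tendsto_of_real tendsto_mult_left)
  qed
qed

lemma continuous_map_linear_functional_bounded:
  assumes F: "linear_functional_on rscale X F"
    and V: "openin T V" "0 \<in> V" "\<And>v. v \<in> V \<Longrightarrow> F v \<le> 1"
  shows "continuous_map T euclideanreal F"
  unfolding Met_TC.continuous_map_to_metric[of T F, simplified] topspace
proof (intro ballI allI impI)
  fix x0 and e :: real assume x0: "x0 \<in> X" and e: "0 < e"
  have Fdiff: "F (x - y) = F x - F y" if "x \<in> X" "y \<in> X" for x y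
  proof -
    have "F (x + rscale (- 1) y) = F x + (- 1) * F y"
      using F that scale_mem unfolding linear_functional_on_def by metis
    then show ?thesis by simp
  qed
  define k where "k = 2 / e"
  have k: "0 < k" using e by (simp add: k_def)
  have small: "F z \<le> e / 2" if "z \<in> X" "rscale k z \<in> V" for z
  proof -
    have "k * F z \<le> 1" using F V(3) that unfolding linear_functional_on_def by metis
    then show ?thesis using k by (simp add: k_def field_simps)
  qed
  define N where "N = {y \<in> X. rscale k (y - x0) \<in> V} \<inter> {y \<in> X. rscale k (x0 - y) \<in> V}"
  have "openin T {y \<in> X. rscale k (y - x0) \<in> V}"
    using openin_preimage[OF continuous_map_compose[OF continuous_map_diff_right[OF x0] continuous_map_scale] V(1)]
    by (simp add: o_def)
  moreover have "openin T {y \<in> X. rscale k (x0 - y) \<in> V}"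
    using openin_preimage[OF continuous_map_compose[OF continuous_map_diff_left[OF x0] continuous_map_scale] V(1)]
    by (simp add: o_def)
  ultimately have "openin T N" by (simp add: N_def openin_Int)
  moreover have "x0 \<in> N" using x0 V(2) by (simp add: N_def)
  moreover have "dist (F x0) (F y) < e" if "y \<in> N" for y
  proof -
    have y: "y \<in> X" using that by (simp add: N_def)
    have "F y - F x0 \<le> e / 2" "F x0 - F y \<le> e / 2"
      using small[OF diff_mem[OF y x0]] small[OF diff_mem[OF x0 y]] that Fdiff y x0 by (auto simp: N_def)
    then show ?thesis using e by (simp add: dist_real_def abs_le_iff)
  qed
  ultimately show "\<exists>U. openin T U \<and> x0 \<in> U \<and> (\<forall>y\<in>U. dist (F x0) (F y) < e)" by blast
qed

lemma absorbing_rscale: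
  assumes "x \<in> X" "openin T V" "0 \<in> V"
  shows "\<exists>t>0. rscale (1 / t) x \<in> V"
proof -
  obtain e where "0 < e" "\<And>c. cmod c < e \<Longrightarrow> sscale c x \<in> V"
    using absorbing[OF assms] by blast
  then have "rscale (1 / (2 / e)) x \<in> V" by simp
  then show ?thesis using \<open>0 < e\<close> by (intro exI[of _ "2 / e"]) simp
qed

lemma convex_nbhd_bounding_functional:
  assumes lc: "locally_convex T" and M: "seq_subspace M" "M \<subseteq> X"
    and g: "linear_functional_on sscale M g" "continuous_map (subtopology T M) euclidean g"
  obtains V where "openin T V" "0 \<in> V" "convex_seq V" "\<And>v. v \<in> V \<Longrightarrow> v \<in> M \<Longrightarrow> cmod (g v) < 1"
proof -
  have tM: "topspace (subtopology T M) = M" using M(2) topspace by auto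
  have "openin (subtopology T M) {x \<in> topspace (subtopology T M). g x \<in> ball 0 1}"
    by (rule openin_continuous_map_preimage[OF g(2)]) simp
  then have "openin (subtopology T M) {x \<in> M. cmod (g x) < 1}" unfolding tM by simp
  then obtain W where W: "openin T W" "{x \<in> M. cmod (g x) < 1} = W \<inter> M"
    by (auto simp: openin_subtopology)
  have "g (sscale 0 0) = 0 * g 0"
    using g(1) seq_subspace_zero[OF M(1)] unfolding linear_functional_on_def by blast
  then have "g 0 = 0" by simp
  then have "0 \<in> {x \<in> M. cmod (g x) < 1}" using seq_subspace_zero[OF M(1)] by simp
  then have "0 \<in> W" unfolding W(2) by simp
  then obtain V where V: "openin T V" "0 \<in> V" "V \<subseteq> W" "convex_seq V"
    using lc W(1) unfolding locally_convex_def by blast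
  have "cmod (g v) < 1" if "v \<in> V" "v \<in> M" for v
  proof -
    have "v \<in> W \<inter> M" using that V(3) by blast
    then show ?thesis by (simp flip: W(2))
  qed
  with V(1,2,4) show ?thesis by (rule that)
qed

theorem continuous_functional_extension:
  assumes lc: "locally_convex T" and M: "seq_subspace M" "M \<subseteq> X"
    and g: "linear_functional_on sscale M g" "continuous_map (subtopology T M) euclidean g"
  shows "\<exists>f\<in>cdual X T. \<forall>x\<in>M. f x = g x"
proof -
  obtain V where V: "openin T V" "0 \<in> V" "convex_seq V" "\<And>v. v \<in> V \<Longrightarrow> v \<in> M \<Longrightarrow> cmod (g v) < 1"
    using convex_nbhd_bounding_functional[OF lc M g] by blast
  define p where "p = minkowski_functional V"
  have p: "sublinear_on rscale X p"
    unfolding p_def using subspace V(3) absorbing_rscale[OF _ V(1,2)]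
    by (rule sublinear_minkowski_functional)
  have "\<forall>x\<in>M. Re (g x) \<le> p x"
    unfolding p_def using Re_le_minkowski_functional[OF M(1) g(1) V(4)] absorbing_rscale[OF _ V(1,2)] M(2)
    by blast
  then obtain F where F: "linear_functional_on rscale X F" "\<forall>x\<in>X. F x \<le> p x"
    "\<forall>x\<in>M. F x = Re (g x)"
    by (rule hahn_banach_sublinear[OF vector_space_rscale seq_subspace_rscale_subspace[OF subspace] p
        seq_subspace_rscale_subspace[OF M(1)] M(2) linear_functional_Re[OF g(1)]])
  have "F v \<le> 1" if "v \<in> V" for v
  proof -
    have "v \<in> X" using that openin_subset[OF V(1)] topspace by blast
    then have "F v \<le> p v" using F(2) by blast
    also have "p v \<le> 1" unfolding p_def using that by (intro minkowski_functional_le) auto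
    finally show ?thesis .
  qed
  then have "continuous_map T euclideanreal F"
    using F(1) V(1,2) by (rule continuous_map_linear_functional_bounded[rotated 3])
  then have "complexify F \<in> cdual X T"
    unfolding cdual_iff using linear_functional_complexify[OF subspace F(1)]
    by (simp add: continuous_map_complexify)
  moreover have "\<forall>x\<in>M. complexify F x = g x" using complexify_Re_eq[OF M(1) g(1) F(3)] by blast
  ultimately show ?thesis by blast
qed

end

section \<open>Completeness of completely metrizable vector spaces\<close>

text \<open>Cauchy sequences for the additive uniformity of a topological vector space.  The metric of a
  completely metrizable topology need not be translation invariant, so these are not simply the
  metric Cauchy sequences.\<close>

definition tvs_cauchy :: "seq topology \<Rightarrow> (nat \<Rightarrow> seq) \<Rightarrow> bool" where
  "tvs_cauchy T s \<longleftrightarrow> (\<forall>U. openin T U \<and> 0 \<in> U \<longrightarrow> (\<exists>N. \<forall>m\<ge>N. \<forall>n\<ge>N. s m - s n \<in> U))"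

lemma (in Metric_space) MCauchy_geometric:
  assumes "range u \<subseteq> M" "\<And>j i. d (u j) (u (j + i)) < (1 / 2) ^ j"
  shows "MCauchy u"
  unfolding MCauchy_def
proof (intro conjI allI impI assms(1))
  fix e :: real assume "0 < e"
  then obtain N where N: "(1 / 2 :: real) ^ N < e / 2" using real_arch_pow_inv[of "e / 2" "1 / 2"] by auto
  show "\<exists>N. \<forall>n n'. N \<le> n \<longrightarrow> N \<le> n' \<longrightarrow> d (u n) (u n') < e"
  proof (intro exI allI impI)
    fix n n' assume "N \<le> n" "N \<le> n'"
    have "d (u n) (u n') \<le> d (u N) (u n) + d (u N) (u n')"
      using triangle'' assms(1) by blast
    also have "d (u N) (u n) < (1 / 2) ^ N" using assms(2)[of N "n - N"] \<open>N \<le> n\<close> by simp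
    also have "d (u N) (u n') < (1 / 2) ^ N" using assms(2)[of N "n' - N"] \<open>N \<le> n'\<close> by simp
    finally show "d (u n) (u n') < e" using N by simp
  qed
qed

lemma nested_nbhds_dist:
  fixes t :: "nat \<Rightarrow> 'a::ab_group_add"
  assumes E0: "\<And>j. 0 \<in> E j" and E_mono: "\<And>j. E (Suc j) \<subseteq> E j"
    and E_half: "\<And>j u v. u \<in> E (Suc j) \<Longrightarrow> v \<in> E (Suc j) \<Longrightarrow> u + v \<in> E j"
    and t_step: "\<And>j. t (j + 2) - t j \<in> E j"
    and small: "\<And>j u v. u \<in> E j \<Longrightarrow> v \<in> E j \<Longrightarrow> d (t j) (t j + (u + v)) < (1 / 2 :: real) ^ j"
  shows "d (t j) (t (j + 2 * i)) < (1 / 2) ^ j"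
proof -
  have tail: "t (j + 2 + 2 * i) - t (j + 2) \<in> E (Suc j)" for i j
  proof (induction i arbitrary: j)
    case 0
    show ?case using E0 by simp
  next
    case (Suc i)
    have "t (j + 2 + 2 * Suc i) - t (j + 2)
        = (t ((j + 2) + 2 + 2 * i) - t ((j + 2) + 2)) + (t ((j + 2) + 2) - t (j + 2))"
      by (simp add: algebra_simps)
    moreover have "t ((j + 2) + 2 + 2 * i) - t ((j + 2) + 2) \<in> E (Suc (Suc j))"
      using Suc.IH[of "j + 2"] E_mono[of "Suc (Suc j)"] by (auto simp: numeral_2_eq_2)
    moreover have "t ((j + 2) + 2) - t (j + 2) \<in> E (Suc (Suc j))"
      using t_step[of "j + 2"] E_mono[of "Suc j"] by (auto simp: numeral_2_eq_2)
    ultimately show ?case using E_half[of _ "Suc j"] by presburger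
  qed
  show ?thesis
  proof (cases i)
    case 0
    then show ?thesis using small[OF E0 E0] by simp
  next
    case (Suc i')
    have "t j + ((t (j + 2) - t j) + (t (j + 2 + 2 * i') - t (j + 2))) = t (j + 2 * i)"
      using Suc by (simp add: algebra_simps)
    moreover have "t (j + 2 + 2 * i') - t (j + 2) \<in> E j" using tail E_mono by blast
    ultimately show ?thesis using small[OF t_step] by metis
  qed
qed

context seq_tvs
begin

lemma continuous_map_diff_pair: "continuous_map (prod_topology T T) T (\<lambda>(x, y). x - y)"
proof -
  have "continuous_map (prod_topology T T) (prod_topology T T) (\<lambda>p. (fst p, - snd p))"
    by (intro continuous_map_pairedI continuous_map_fst continuous_map_compose[OF continuous_map_snd
        continuous_map_neg, unfolded o_def])
  from continuous_map_compose[OF this continuous_add] show ?thesis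
    by (simp add: o_def case_prod_unfold)
qed

lemma limitin_diff:
  assumes "limitin T a la sequentially" "limitin T b lb sequentially"
  shows "limitin T (\<lambda>k. a k - b k) (la - lb) sequentially"
proof -
  have "limitin (prod_topology T T) (\<lambda>k. (a k, b k)) (la, lb) sequentially"
    using assms by (simp add: limitin_pairwise o_def)
  from continuous_map_limit[OF continuous_map_diff_pair this] show ?thesis by (simp add: o_def)
qed

lemma tvs_cauchy_limitin_subseq:
  assumes s: "tvs_cauchy T s" and \<sigma>: "strict_mono \<sigma>"
    and lim: "limitin T (\<lambda>k. s (\<sigma> k)) z sequentially"
  shows "limitin T s z sequentially"
  unfolding limitin_def
proof (intro conjI allI impI)
  show z: "z \<in> topspace T" using lim by (simp add: limitin_def)
  fix U assume U: "openin T U \<and> z \<in> U"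
  have "z - 0 \<in> U" using U by simp
  with U z obtain A B where AB: "openin T A" "openin T B" "z \<in> A" "0 \<in> B"
    and diff: "\<And>a b. a \<in> A \<Longrightarrow> b \<in> B \<Longrightarrow> a - b \<in> U"
    using diff_nbhds[of U z 0] zero_mem topspace by metis
  have "\<forall>\<^sub>F k in sequentially. s (\<sigma> k) \<in> A" using lim AB(1,3) by (simp add: limitin_def)
  then obtain K where K: "\<And>k. k \<ge> K \<Longrightarrow> s (\<sigma> k) \<in> A" unfolding eventually_sequentially by blast
  have "\<exists>N. \<forall>m\<ge>N. \<forall>n\<ge>N. s m - s n \<in> B" using s AB(2,4) unfolding tvs_cauchy_def by simp
  then obtain N where N: "\<And>m n. m \<ge> N \<Longrightarrow> n \<ge> N \<Longrightarrow> s m - s n \<in> B" by blast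
  have "s n \<in> U" if n: "n \<ge> N" for n
  proof -
    define k where "k = max K N"
    have "k \<ge> K" "\<sigma> k \<ge> N" using seq_suble[OF \<sigma>, of k] by (simp_all add: k_def)
    then have "s (\<sigma> k) \<in> A" "s (\<sigma> k) - s n \<in> B" using K N n by simp_all
    then have "s (\<sigma> k) - (s (\<sigma> k) - s n) \<in> U" by (rule diff)
    then show ?thesis by simp
  qed
  then show "\<forall>\<^sub>F n in sequentially. s n \<in> U" unfolding eventually_sequentially by blast
qed

lemma small_nbhd:
  assumes d: "Metric_space X d" "T = Metric_space.mtopology X d"
    and x: "x \<in> X" and e: "0 < e" and E: "openin T E" "0 \<in> E"
  obtains E' where "openin T E'" "0 \<in> E'" "E' \<subseteq> E" "\<And>u v. u \<in> E' \<Longrightarrow> v \<in> E' \<Longrightarrow> u + v \<in> E"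
    "\<And>u v. u \<in> E' \<Longrightarrow> v \<in> E' \<Longrightarrow> d x (x + (u + v)) < e"
proof -
  interpret Metric_space X d by (rule d(1))
  have "openin T (mball x e)" "x + 0 \<in> mball x e" using d(2) x e by simp_all
  then obtain A B where AB: "openin T A" "openin T B" "x \<in> A" "0 \<in> B"
    and AB_sum: "\<And>a b. a \<in> A \<Longrightarrow> b \<in> B \<Longrightarrow> a + b \<in> mball x e"
    using add_nbhds[of "mball x e" x 0] x zero_mem by metis
  obtain B' where B': "openin T B'" "0 \<in> B'" "B' \<subseteq> B" "\<And>u v. u \<in> B' \<Longrightarrow> v \<in> B' \<Longrightarrow> u + v \<in> B"
    using half_nbhd[OF AB(2,4)] by metis
  obtain E'' where E'': "openin T E''" "0 \<in> E''" "E'' \<subseteq> E" "\<And>u v. u \<in> E'' \<Longrightarrow> v \<in> E'' \<Longrightarrow> u + v \<in> E"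
    using half_nbhd[OF E] by metis
  have "d x (x + (u + v)) < e" if "u \<in> B' \<inter> E''" "v \<in> B' \<inter> E''" for u v
    using AB_sum[OF AB(3) B'(4)] that by simp
  moreover have "u + v \<in> E" if "u \<in> B' \<inter> E''" "v \<in> B' \<inter> E''" for u v
    using E''(4) that by simp
  ultimately show ?thesis
    using that[of "B' \<inter> E''"] B'(1,2) E''(1,2,3) by blast
qed

lemma alternating_chain_step:
  assumes d: "Metric_space X d" "T = Metric_space.mtopology X d"
    and s: "tvs_cauchy T s" "\<And>n. s n \<in> X" and t: "t \<in> X" and E: "openin T E" "0 \<in> E"
  obtains n' t' E' where "n < n'" "\<And>m k. m \<ge> n' \<Longrightarrow> k \<ge> n' \<Longrightarrow> s m - s k \<in> E"
    "t' = (if even j then t + s n' else t - s n')" "t' \<in> X" "openin T E'" "0 \<in> E'" "E' \<subseteq> E"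
    "\<And>u v. u \<in> E' \<Longrightarrow> v \<in> E' \<Longrightarrow> u + v \<in> E"
    "\<And>u v. u \<in> E' \<Longrightarrow> v \<in> E' \<Longrightarrow> d t' (t' + (u + v)) < (1 / 2) ^ Suc j"
proof -
  obtain n1 where n1: "\<forall>m\<ge>n1. \<forall>k\<ge>n1. s m - s k \<in> E" using s(1) E unfolding tvs_cauchy_def by blast
  define n' where "n' = max (Suc n) n1"
  define t' where "t' = (if even j then t + s n' else t - s n')"
  have t': "t' \<in> X" unfolding t'_def using add_mem diff_mem s(2) t by simp
  obtain E' where "openin T E'" "0 \<in> E'" "E' \<subseteq> E" "\<And>u v. u \<in> E' \<Longrightarrow> v \<in> E' \<Longrightarrow> u + v \<in> E"
    "\<And>u v. u \<in> E' \<Longrightarrow> v \<in> E' \<Longrightarrow> d t' (t' + (u + v)) < (1 / 2) ^ Suc j"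
    using small_nbhd[OF d t', of "(1 / 2) ^ Suc j" E] E by auto
  moreover have "n < n'" "\<And>m k. m \<ge> n' \<Longrightarrow> k \<ge> n' \<Longrightarrow> s m - s k \<in> E"
    using n1 by (auto simp: n'_def)
  ultimately show ?thesis using that t' t'_def by blast
qed

lemma alternating_sum_step:
  fixes s t :: "nat \<Rightarrow> 'a::ab_group_add"
  assumes t_step: "\<And>j. t (Suc j) = (if even j then t j + s (n (Suc j)) else t j - s (n (Suc j)))"
    and tail: "\<And>j m k. m \<ge> n (Suc j) \<Longrightarrow> k \<ge> n (Suc j) \<Longrightarrow> s m - s k \<in> E j"
    and n_mono: "\<And>j. n j \<le> n (Suc j)"
  shows "t (j + 2) - t j \<in> E j"
proof -
  have le: "n (Suc j) \<le> n (Suc (Suc j))" by (rule n_mono)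
  show ?thesis
  proof (cases "even j")
    case True
    then have "t (j + 2) - t j = s (n (Suc j)) - s (n (Suc (Suc j)))"
      using t_step[of j] t_step[of "Suc j"] by simp
    then show ?thesis using tail[of j "n (Suc j)" "n (Suc (Suc j))"] le by simp
  next
    case False
    then have "t (j + 2) - t j = s (n (Suc (Suc j))) - s (n (Suc j))"
      using t_step[of j] t_step[of "Suc j"] by simp
    then show ?thesis using tail[of j "n (Suc (Suc j))" "n (Suc j)"] le by simp
  qed
qed

text \<open>The points \<open>t j\<close> alternately add and subtract terms of \<open>s\<close> taken ever deeper in the
  tail, so that \<open>t (j + 2) - t j\<close> is a difference of two tail terms chosen after \<open>E j\<close>, although
  \<open>E j\<close> itself depends on \<open>t j\<close>.\<close>

lemma tvs_cauchy_alternating_chain: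
  assumes d: "Metric_space X d" "T = Metric_space.mtopology X d"
    and s: "tvs_cauchy T s" "\<And>n. s n \<in> X"
  obtains N t E where "\<And>j. t j \<in> X" "\<And>j. 0 \<in> E j"
    "\<And>j u v. u \<in> E j \<Longrightarrow> v \<in> E j \<Longrightarrow> d (t j) (t j + (u + v)) < (1 / 2) ^ j"
    "\<And>j. E (Suc j) \<subseteq> E j" "\<And>j u v. u \<in> E (Suc j) \<Longrightarrow> v \<in> E (Suc j) \<Longrightarrow> u + v \<in> E j"
    "\<And>j. t (j + 2) - t j \<in> E j" "strict_mono N" "\<And>k. s (N k) = t (2 * k + 1) - t (2 * k)"
proof -
  define P where "P j st \<longleftrightarrow> fst (snd st) \<in> X \<and> openin T (snd (snd st)) \<and> 0 \<in> snd (snd st)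
    \<and> (\<forall>u\<in>snd (snd st). \<forall>v\<in>snd (snd st). d (fst (snd st)) (fst (snd st) + (u + v)) < (1 / 2) ^ j)"
    for j :: nat and st :: "nat \<times> seq \<times> seq set"
  define Q where "Q j st st' \<longleftrightarrow> fst st < fst st' \<and> (\<forall>m\<ge>fst st'. \<forall>n\<ge>fst st'. s m - s n \<in> snd (snd st))
    \<and> fst (snd st') = (if even j then fst (snd st) + s (fst st') else fst (snd st) - s (fst st'))
    \<and> snd (snd st') \<subseteq> snd (snd st) \<and> (\<forall>u\<in>snd (snd st'). \<forall>v\<in>snd (snd st'). u + v \<in> snd (snd st))"
    for j :: nat and st st' :: "nat \<times> seq \<times> seq set"
  have "openin T X" using openin_topspace[of T] topspace by simp
  then obtain E where "openin T E" "0 \<in> E" "E \<subseteq> X" "\<And>u v. u \<in> E \<Longrightarrow> v \<in> E \<Longrightarrow> u + v \<in> X"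
    "\<And>u v. u \<in> E \<Longrightarrow> v \<in> E \<Longrightarrow> d 0 (0 + (u + v)) < 1"
    using small_nbhd[OF d zero_mem zero_less_one _ zero_mem] by blast
  then have "P 0 (0, 0, E)" using zero_mem unfolding P_def fst_conv snd_conv power_0 by blast
  moreover have "\<exists>st'. P (Suc j) st' \<and> Q j st st'" if "P j st" for j st
  proof -
    obtain n t E where st: "st = (n, t, E)" by (cases st) auto
    have tE: "t \<in> X" "openin T E" "0 \<in> E" using that by (simp_all add: P_def st)
    obtain n' t' E' where
      "n < n'" "\<And>m k. m \<ge> n' \<Longrightarrow> k \<ge> n' \<Longrightarrow> s m - s k \<in> E" "t' = (if even j then t + s n' else t - s n')"
      "t' \<in> X" "openin T E'" "0 \<in> E'" "E' \<subseteq> E" "\<And>u v. u \<in> E' \<Longrightarrow> v \<in> E' \<Longrightarrow> u + v \<in> E"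
      "\<And>u v. u \<in> E' \<Longrightarrow> v \<in> E' \<Longrightarrow> d t' (t' + (u + v)) < (1 / 2) ^ Suc j"
      by (rule alternating_chain_step[OF d s tE, where n = n and j = j]) blast
    then have "P (Suc j) (n', t', E')" "Q j st (n', t', E')"
      unfolding P_def Q_def st fst_conv snd_conv by blast+
    then show ?thesis by blast
  qed
  ultimately obtain f where f: "\<And>j. P j (f j)" "\<And>j. Q j (f j) (f (Suc j))"
    using dependent_nat_choice[of P Q] by blast
  define n where "n j = fst (f j)" for j
  define t where "t j = fst (snd (f j))" for j
  define E where "E j = snd (snd (f j))" for j
  have "t j \<in> X" "0 \<in> E j" "\<And>u v. u \<in> E j \<Longrightarrow> v \<in> E j \<Longrightarrow> d (t j) (t j + (u + v)) < (1 / 2) ^ j" for j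
    using f(1)[of j] by (simp_all add: P_def t_def E_def)
  moreover have n_less: "n j < n (Suc j)"
    and tail: "\<And>m k. m \<ge> n (Suc j) \<Longrightarrow> k \<ge> n (Suc j) \<Longrightarrow> s m - s k \<in> E j"
    and t_step: "t (Suc j) = (if even j then t j + s (n (Suc j)) else t j - s (n (Suc j)))"
    and "E (Suc j) \<subseteq> E j" "\<And>u v. u \<in> E (Suc j) \<Longrightarrow> v \<in> E (Suc j) \<Longrightarrow> u + v \<in> E j" for j
    using f(2)[of j] by (simp_all add: Q_def t_def E_def n_def)
  moreover have "t (j + 2) - t j \<in> E j" for j
    using alternating_sum_step[OF t_step tail less_imp_le[OF n_less]] .
  moreover have "strict_mono (\<lambda>k. n (2 * k + 1))"
    using strict_monoI_Suc[of n, OF n_less] by (auto simp: strict_mono_def)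
  moreover have "s (n (2 * k + 1)) = t (2 * k + 1) - t (2 * k)" for k
    using t_step[of "2 * k"] by simp
  ultimately show ?thesis using that[of t E "\<lambda>k. n (2 * k + 1)"] by blast
qed

lemma tvs_cauchy_convergent:
  assumes complete: "completely_metrizable_space T" and s: "tvs_cauchy T s" "\<And>n. s n \<in> X"
  shows "\<exists>z\<in>X. limitin T s z sequentially"
proof -
  obtain M d where Md: "Metric_space M d" "Metric_space.mcomplete M d" "T = Metric_space.mtopology M d"
    using complete unfolding completely_metrizable_space_def by blast
  have "M = X" using Md(1,3) topspace Metric_space.topspace_mtopology by metis
  then interpret Metric_space X d using Md(1) by simp
  have d: "Metric_space X d" "T = mtopology" "mcomplete" using Md \<open>M = X\<close> by simp_all
  obtain N t E where tX: "\<And>j. t j \<in> X" and chain: "\<And>j. 0 \<in> E j" "\<And>j. E (Suc j) \<subseteq> E j"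
    "\<And>j u v. u \<in> E (Suc j) \<Longrightarrow> v \<in> E (Suc j) \<Longrightarrow> u + v \<in> E j" "\<And>j. t (j + 2) - t j \<in> E j"
    "\<And>j u v. u \<in> E j \<Longrightarrow> v \<in> E j \<Longrightarrow> d (t j) (t j + (u + v)) < (1 / 2) ^ j"
    and N: "strict_mono N" "\<And>k. s (N k) = t (2 * k + 1) - t (2 * k)"
    using tvs_cauchy_alternating_chain[OF d(1,2) s] by metis
  have dist: "d (t j) (t (j + 2 * i)) < (1 / 2) ^ j" for j i
    by (rule nested_nbhds_dist[where E = E and t = t]) (fact chain)+
  have "MCauchy (\<lambda>k. t (2 * k + r))" for r
  proof (rule MCauchy_geometric)
    show "range (\<lambda>k. t (2 * k + r)) \<subseteq> X" using tX by auto
    fix j i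
    have "d (t (2 * j + r)) (t (2 * (j + i) + r)) = d (t (2 * j + r)) (t ((2 * j + r) + 2 * i))"
      by (simp add: algebra_simps)
    also have "\<dots> < (1 / 2) ^ (2 * j + r)" by (rule dist)
    also have "\<dots> \<le> (1 / 2) ^ j" by (rule power_decreasing) simp_all
    finally show "d (t (2 * j + r)) (t (2 * (j + i) + r)) < (1 / 2) ^ j" .
  qed
  then have "\<exists>l. limitin T (\<lambda>k. t (2 * k + r)) l sequentially" for r
    using d(3) unfolding mcomplete_def d(2) by blast
  then obtain la lb where "limitin T (\<lambda>k. t (2 * k + 1)) la sequentially"
    "limitin T (\<lambda>k. t (2 * k + 0)) lb sequentially"
    by meson
  then have "limitin T (\<lambda>k. s (N k)) (la - lb) sequentially"
    unfolding N(2) using limitin_diff by simp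
  then have "limitin T s (la - lb) sequentially" by (rule tvs_cauchy_limitin_subseq[OF s(1) N(1)])
  moreover have "la - lb \<in> X" using calculation topspace by (simp add: limitin_def)
  ultimately show ?thesis by blast
qed

end

section \<open>Inclusions of FK-spaces\<close>

locale fk = seq_tvs +
  assumes complete: "completely_metrizable_space T"
    and continuous_coordinate: "\<And>j. continuous_map T euclidean (\<lambda>x. x j)"

lemma FK_space_imp_fk:
  assumes "FK_space X T"
  shows "fk X T"
proof unfold_locales
  show "continuous_map (prod_topology T T) T (\<lambda>(x, y). x + y)"
    using assms unfolding FK_space_def by (simp add: sadd_eq_plus[abs_def])
qed (use assms in \<open>simp_all add: FK_space_def\<close>)

lemma FK_space_imp_locally_convex:
  assumes "FK_space X T"
  shows "locally_convex T"
  using assms unfolding FK_space_def locally_convex_def convex_seq_def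
  by (simp add: sadd_eq_plus zero_fun_def)

lemma (in fk) limitin_coordinate: "limitin T s l sequentially \<Longrightarrow> (\<lambda>n. s n j) \<longlonglongrightarrow> l j"
  using continuous_map_limit[OF continuous_coordinate[of j], of s l sequentially] by (simp add: o_def)

lemma fk_limitin_unique:
  assumes "fk X TX" "fk Y TY" "limitin TX s a sequentially" "limitin TY s b sequentially"
  shows "a = b"
proof
  fix j
  show "a j = b j"
    using fk.limitin_coordinate[OF assms(1,3)] fk.limitin_coordinate[OF assms(2,4)]
    by (rule LIMSEQ_unique)
qed

lemma (in fk) fk_closedin_subspace:
  assumes "closedin T S" "seq_subspace S"
  shows "fk S (subtopology T S)"
proof -
  have "S \<subseteq> X" using closedin_subset[OF assms(1)] topspace by simp
  then interpret S: seq_tvs S "subtopology T S" using assms(2) by (rule seq_tvs_subtopology[rotated])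
  show ?thesis
    by unfold_locales (simp_all add: completely_metrizable_space_closedin[OF complete assms(1)]
        continuous_map_from_subtopology[OF continuous_coordinate])
qed

lemma telescoping_mem:
  fixes r :: "nat \<Rightarrow> 'a::ab_group_add"
  assumes E0: "\<And>k. 0 \<in> E k" and E_half: "\<And>k u v. u \<in> E (Suc k) \<Longrightarrow> v \<in> E (Suc k) \<Longrightarrow> u + v \<in> E k"
    and r: "\<And>k. r k - r (Suc k) \<in> E (Suc k)"
  shows "r n - r (n + i) \<in> E n"
proof (induction i arbitrary: n)
  case 0
  show ?case using E0 by simp
next
  case (Suc i)
  have "r n - r (n + Suc i) = (r n - r (Suc n)) + (r (Suc n) - r (Suc n + i))" by simp
  then show ?case using E_half[OF r Suc.IH] by simp
qed

context seq_tvs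
begin

lemma shrinking_nbhd_base:
  assumes "metrizable_space T"
  obtains B :: "nat \<Rightarrow> seq set" where "\<And>k. openin T (B k)" "\<And>k. 0 \<in> B k"
    "\<And>G. openin T G \<Longrightarrow> 0 \<in> G \<Longrightarrow> \<exists>K. \<forall>k\<ge>K. B k \<subseteq> G"
proof -
  obtain M d where Md: "Metric_space M d" "T = Metric_space.mtopology M d"
    using assms unfolding metrizable_space_def by blast
  have "M = X" using Md topspace Metric_space.topspace_mtopology by metis
  then interpret Metric_space X d using Md(1) by simp
  have T: "T = mtopology" using Md(2) \<open>M = X\<close> by simp
  define B where "B k = mball 0 (1 / real (Suc k))" for k :: nat
  have "\<exists>K. \<forall>k\<ge>K. B k \<subseteq> G" if G: "openin T G" "0 \<in> G" for G
  proof -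
    obtain \<rho> where "0 < \<rho>" "mball 0 \<rho> \<subseteq> G" using G unfolding T openin_mtopology by blast
    moreover obtain K where "1 / real (Suc K) < \<rho>"
      using reals_Archimedean[OF \<open>0 < \<rho>\<close>] by (auto simp: inverse_eq_divide)
    moreover have "B k \<subseteq> mball 0 \<rho>" if "k \<ge> K" "1 / real (Suc K) < \<rho>" for k
    proof -
      have "1 / real (Suc k) \<le> 1 / real (Suc K)" using that(1) by (intro divide_left_mono) auto
      then show ?thesis using that(2) by (auto simp: B_def)
    qed
    ultimately show ?thesis by blast
  qed
  then show ?thesis using that[of B] zero_mem by (simp add: B_def T)
qed

lemma nested_nbhds:
  assumes "metrizable_space T" "openin T U" "0 \<in> U"
  obtains E :: "nat \<Rightarrow> seq set" where "E 0 = U" "\<And>k. openin T (E k)" "\<And>k. 0 \<in> E k" "\<And>k. E (Suc k) \<subseteq> E k"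
    "\<And>k u v. u \<in> E (Suc k) \<Longrightarrow> v \<in> E (Suc k) \<Longrightarrow> u + v \<in> E k"
    "\<And>G. openin T G \<Longrightarrow> 0 \<in> G \<Longrightarrow> \<exists>k. E k \<subseteq> G"
proof -
  obtain B :: "nat \<Rightarrow> seq set" where B: "\<And>k. openin T (B k)" "\<And>k. 0 \<in> B k"
    "\<And>G. openin T G \<Longrightarrow> 0 \<in> G \<Longrightarrow> \<exists>K. \<forall>k\<ge>K. B k \<subseteq> G"
    using shrinking_nbhd_base[OF assms(1)] by metis
  define P where "P k E \<longleftrightarrow> openin T E \<and> 0 \<in> E \<and> (k = 0 \<longrightarrow> E = U)" for k :: nat and E :: "seq set"
  define Q where "Q k E E' \<longleftrightarrow> E' \<subseteq> E \<and> (\<forall>u\<in>E'. \<forall>v\<in>E'. u + v \<in> E) \<and> E' \<subseteq> B k"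
    for k :: nat and E E' :: "seq set"
  have "\<exists>E'. P (Suc k) E' \<and> Q k E E'" if PE: "P k E" for k E
  proof -
    have E: "openin T E" "0 \<in> E" using PE by (simp_all add: P_def)
    obtain E1 where E1: "openin T E1" "0 \<in> E1" "E1 \<subseteq> E" "\<And>u v. u \<in> E1 \<Longrightarrow> v \<in> E1 \<Longrightarrow> u + v \<in> E"
      using half_nbhd[OF E] by metis
    have "P (Suc k) (E1 \<inter> B k)" using E1(1,2) B(1,2) by (simp add: P_def openin_Int)
    moreover have "Q k E (E1 \<inter> B k)" using E1(3,4) by (auto simp: Q_def)
    ultimately show ?thesis by blast
  qed
  moreover have "\<exists>E. P 0 E" using assms(2,3) by (auto simp: P_def)
  ultimately obtain E where E: "\<And>k. P k (E k)" "\<And>k. Q k (E k) (E (Suc k))"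
    using dependent_nat_choice[of P Q] by blast
  have E_open: "openin T (E k)" and E0: "0 \<in> E k" for k
    using E(1)[of k] by (simp_all add: P_def)
  have E_U: "E 0 = U" using E(1)[of 0] by (simp add: P_def)
  have E_mono: "E (Suc k) \<subseteq> E k" and E_B: "E (Suc k) \<subseteq> B k"
    and E_half: "\<And>u v. u \<in> E (Suc k) \<Longrightarrow> v \<in> E (Suc k) \<Longrightarrow> u + v \<in> E k" for k
    using E(2)[of k] by (simp_all add: Q_def)
  have "\<exists>k. E k \<subseteq> G" if G: "openin T G" "0 \<in> G" for G
  proof -
    obtain K where "\<forall>k\<ge>K. B k \<subseteq> G" using B(3)[OF G] by blast
    then have "E (Suc K) \<subseteq> G" using E_B[of K] by blast
    then show ?thesis by blast
  qed
  with E_U E_open E0 E_mono E_half show ?thesis by (rule that)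
qed

lemma closure_approximation_sequence:
  assumes W: "\<And>k. openin T (W k)" "\<And>k. 0 \<in> W k" "\<And>k. W k \<subseteq> T closure_of (U k \<inter> X)"
    and y: "y \<in> W 0"
  obtains r where "r 0 = y" "\<And>k. r k \<in> W k" "\<And>k. r k - r (Suc k) \<in> U k"
proof -
  define P where "P k x \<longleftrightarrow> x \<in> W k \<and> (k = 0 \<longrightarrow> x = y)" for k x
  define Q where "Q k x x' \<longleftrightarrow> x - x' \<in> U k" for k x x'
  have "\<exists>x'. P (Suc k) x' \<and> Q k x x'" if "P k x" for k x
  proof -
    have x: "x \<in> W k" using that by (simp add: P_def)
    then have xX: "x \<in> X" using openin_subset[OF W(1)] topspace by blast
    define G where "G = {z \<in> X. x - z \<in> W (Suc k)}"
    have "openin T G" unfolding G_def by (rule openin_preimage[OF continuous_map_diff_left[OF xX] W(1)])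
    moreover have "x \<in> G" using xX W(2) by (simp add: G_def)
    moreover have "x \<in> T closure_of (U k \<inter> X)" using x W(3) by blast
    ultimately obtain z where "z \<in> U k \<inter> X" "z \<in> G" unfolding in_closure_of by blast
    then have "P (Suc k) (x - z)" "Q k x (x - z)" by (simp_all add: P_def Q_def G_def)
    then show ?thesis by blast
  qed
  moreover have "\<exists>x. P 0 x" using y by (simp add: P_def)
  ultimately obtain r where r: "\<And>k. P k (r k)" "\<And>k. Q k (r k) (r (Suc k))"
    using dependent_nat_choice[of P Q] by blast
  have "r 0 = y" using r(1)[of 0] by (simp add: P_def)
  then show ?thesis using that[of r] r by (simp add: P_def Q_def)
qed

lemma closure_of_diff:
  assumes "x \<in> T closure_of A" "y \<in> T closure_of B"
  shows "x - y \<in> T closure_of ((\<lambda>(a, b). a - b) ` (A \<times> B))"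
proof -
  have "(x, y) \<in> prod_topology T T closure_of (A \<times> B)" using assms by (simp add: closure_of_Times)
  then show ?thesis
    using continuous_map_image_closure_subset[OF continuous_map_diff_pair] by fastforce
qed

lemma baire_dilate_interior:
  assumes complete: "completely_metrizable_space T"
    and absorbing: "\<And>y. y \<in> X \<Longrightarrow> \<exists>n. sscale (1 / of_nat (Suc n)) y \<in> V"
  obtains n p where "p \<in> T interior_of (T closure_of {y \<in> X. sscale (1 / of_nat (Suc n)) y \<in> V})"
proof -
  define S where "S n = {y \<in> X. sscale (1 / of_nat (Suc n)) y \<in> V}" for n
  have union: "(\<Union>n. T closure_of S n) = X"
  proof
    show "(\<Union>n. T closure_of S n) \<subseteq> X" using closure_of_subset_topspace[of T] topspace by blast
    show "X \<subseteq> (\<Union>n. T closure_of S n)"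
    proof
      fix y assume y: "y \<in> X"
      then obtain n where "sscale (1 / of_nat (Suc n)) y \<in> V" using absorbing by blast
      then have "y \<in> S n" using y by (simp add: S_def)
      moreover have "S n \<subseteq> topspace T" using topspace by (auto simp: S_def)
      ultimately have "y \<in> T closure_of S n" using closure_of_subset by blast
      then show "y \<in> (\<Union>n. T closure_of S n)" by blast
    qed
  qed
  have "\<exists>n. T interior_of (T closure_of S n) \<noteq> {}"
  proof (rule ccontr)
    assume "\<nexists>n. T interior_of (T closure_of S n) \<noteq> {}"
    then have "T interior_of (\<Union>n. T closure_of S n) = {}"
      by (intro Baire_category_alt[OF disjI1[OF complete]]) auto
    then show False using union interior_of_topspace[of T] topspace zero_mem by simp
  qed
  then obtain n p where "p \<in> T interior_of (T closure_of S n)" by blast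
  then show ?thesis unfolding S_def by (rule that)
qed

lemma baire_difference_nbhd:
  assumes complete: "completely_metrizable_space T"
    and absorbing: "\<And>y. y \<in> X \<Longrightarrow> \<exists>n. sscale (1 / of_nat (Suc n)) y \<in> V"
  obtains W where "openin T W" "0 \<in> W" "W \<subseteq> T closure_of ((\<lambda>(a, b). a - b) ` ((V \<inter> X) \<times> (V \<inter> X)))"
proof -
  obtain n p where p: "p \<in> T interior_of (T closure_of {y \<in> X. sscale (1 / of_nat (Suc n)) y \<in> V})"
    by (rule baire_dilate_interior[OF complete absorbing])
  define S where "S = {y \<in> X. sscale (1 / of_nat (Suc n)) y \<in> V}"
  note p = p[folded S_def]
  define c :: complex where "c = of_nat (Suc n)"
  have c: "c \<noteq> 0" unfolding c_def by (rule of_nat_neq_0)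
  define O' where "O' = {y \<in> X. sscale c y \<in> T interior_of (T closure_of S)}"
  have O'_open: "openin T O'"
    unfolding O'_def by (rule openin_preimage[OF continuous_map_scale openin_interior_of])
  have image_sub: "sscale (1 / c) ` S \<subseteq> V \<inter> X" using scale_mem by (auto simp: S_def c_def)
  have O'_sub: "O' \<subseteq> T closure_of (V \<inter> X)"
  proof
    fix u assume "u \<in> O'"
    then have "sscale c u \<in> T closure_of S"
      using interior_of_subset[of T "T closure_of S"] by (auto simp: O'_def)
    then have "sscale (1 / c) (sscale c u) \<in> T closure_of (sscale (1 / c) ` S)"
      using continuous_map_image_closure_subset[OF continuous_map_scale] by blast
    also have "\<dots> \<subseteq> T closure_of (V \<inter> X)" using image_sub by (rule closure_of_mono)
    finally show "u \<in> T closure_of (V \<inter> X)" using c by simp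
  qed
  define p' where "p' = sscale (1 / c) p"
  have pX: "p \<in> X" using p interior_of_subset_topspace[of T "T closure_of S"] topspace by auto
  have p': "p' \<in> O'" "p' \<in> X" using p pX c scale_mem by (simp_all add: O'_def p'_def)
  define W where "W = {w \<in> X. p' + w \<in> O'}"
  have "openin T W"
    unfolding W_def by (rule openin_preimage[OF continuous_map_translate[OF p'(2)] O'_open])
  moreover have "0 \<in> W" using zero_mem p' by (simp add: W_def)
  moreover have "W \<subseteq> T closure_of ((\<lambda>(a, b). a - b) ` ((V \<inter> X) \<times> (V \<inter> X)))"
  proof
    fix w assume "w \<in> W"
    then have "(p' + w) - p' \<in> T closure_of ((\<lambda>(a, b). a - b) ` ((V \<inter> X) \<times> (V \<inter> X)))"
      using O'_sub p'(1) by (intro closure_of_diff) (auto simp: W_def)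
    then show "w \<in> T closure_of ((\<lambda>(a, b). a - b) ` ((V \<inter> X) \<times> (V \<inter> X)))" by simp
  qed
  ultimately show ?thesis using that by blast
qed

end

lemma (in seq_tvs) tvs_cauchy_nested:
  assumes E: "\<And>G. openin T G \<Longrightarrow> 0 \<in> G \<Longrightarrow> \<exists>k. E k \<subseteq> G"
    and r: "\<And>k n m. k \<le> n \<Longrightarrow> n \<le> m \<Longrightarrow> r n - r m \<in> E k"
  shows "tvs_cauchy T r"
  unfolding tvs_cauchy_def
proof (intro allI impI)
  fix G assume G: "openin T G \<and> 0 \<in> G"
  have "openin T (G \<inter> {x \<in> X. - x \<in> G})" using G openin_preimage[OF continuous_map_neg] by blast
  moreover have "0 \<in> G \<inter> {x \<in> X. - x \<in> G}" using G zero_mem by simp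
  ultimately obtain k where k: "E k \<subseteq> G \<inter> {x \<in> X. - x \<in> G}" using E by blast
  have "r m - r n \<in> G" if "m \<ge> k" "n \<ge> k" for m n
  proof (cases "m \<le> n")
    case True
    then show ?thesis using r[of k m n] that k by auto
  next
    case False
    then have "r n - r m \<in> G \<inter> {x \<in> X. - x \<in> G}" using r[of k n m] that k by auto
    then show ?thesis by simp
  qed
  then show "\<exists>N. \<forall>m\<ge>N. \<forall>n\<ge>N. r m - r n \<in> G" by blast
qed

lemma baire_nbhd_inclusion:
  assumes Y: "fk Y TY" and X: "seq_tvs X TX" and sub: "Y \<subseteq> X" and U: "openin TX U" "0 \<in> U"
  obtains W where "openin TY W" "0 \<in> W" "W \<subseteq> TY closure_of (U \<inter> Y)"
proof -
  interpret Y: fk Y TY by (rule Y)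
  interpret X: seq_tvs X TX by (rule X)
  have "0 - 0 \<in> U" using U by simp
  then obtain A B where AB: "openin TX A" "openin TX B" "0 \<in> A" "0 \<in> B"
    and AB_diff: "\<And>a b. a \<in> A \<Longrightarrow> b \<in> B \<Longrightarrow> a - b \<in> U"
    using X.diff_nbhds[OF U(1) X.zero_mem X.zero_mem] by metis
  define V where "V = A \<inter> B"
  have V: "openin TX V" "0 \<in> V" using AB by (auto simp: V_def)
  have "\<exists>n. sscale (1 / of_nat (Suc n)) y \<in> V" if y: "y \<in> Y" for y
  proof -
    obtain e where e: "0 < e" "\<And>c. cmod c < e \<Longrightarrow> sscale c y \<in> V"
      using X.absorbing[OF _ V] y sub by blast
    obtain n where "inverse (real (Suc n)) < e" using reals_Archimedean[OF e(1)] by blast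
    moreover have "cmod (1 / of_nat (Suc n) :: complex) = 1 / real (Suc n)"
      by (simp only: norm_divide norm_one norm_of_nat)
    ultimately have "cmod (1 / of_nat (Suc n) :: complex) < e" by (simp add: inverse_eq_divide)
    then show ?thesis using e(2) by blast
  qed
  then obtain W where W: "openin TY W" "0 \<in> W"
    "W \<subseteq> TY closure_of ((\<lambda>(a, b). a - b) ` ((V \<inter> Y) \<times> (V \<inter> Y)))"
    using Y.baire_difference_nbhd[OF Y.complete] by metis
  have "(\<lambda>(a, b). a - b) ` ((V \<inter> Y) \<times> (V \<inter> Y)) \<subseteq> U \<inter> Y"
    using AB_diff Y.diff_mem by (auto simp: V_def)
  then have "W \<subseteq> TY closure_of (U \<inter> Y)" using W(3) closure_of_mono by blast
  with W(1,2) show ?thesis by (rule that)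
qed

lemma approximation_limit_mem:
  assumes Y: "fk Y TY" and X: "fk X TX" and sub: "Y \<subseteq> X"
    and E: "\<And>k. openin TX (E k)" "\<And>k. 0 \<in> E k" "\<And>k. E (Suc k) \<subseteq> E k"
      "\<And>k u v. u \<in> E (Suc k) \<Longrightarrow> v \<in> E (Suc k) \<Longrightarrow> u + v \<in> E k"
      "\<And>G. openin TX G \<Longrightarrow> 0 \<in> G \<Longrightarrow> \<exists>k. E k \<subseteq> G"
    and r: "\<And>k. r k \<in> Y" "\<And>k. r k - r (Suc k) \<in> E (Suc k)" "limitin TY r 0 sequentially"
  shows "\<exists>a\<in>E 0. \<exists>b\<in>E 0. r 0 = a + b"
proof -
  interpret Y: fk Y TY by (rule Y)
  interpret X: fk X TX by (rule X)
  define s where "s k = r 0 - r k" for k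
  have sX: "s k \<in> X" for k using Y.diff_mem r(1) sub by (auto simp: s_def)
  have tel: "r n - r m \<in> E k" if "k \<le> n" "n \<le> m" for k n m
  proof -
    have "r n - r (n + (m - n)) \<in> E n" by (rule telescoping_mem[of E, OF E(2,4) r(2)])
    moreover have "E n \<subseteq> E k" using lift_Suc_antimono_le[of E, OF E(3) that(1)] .
    ultimately show ?thesis using that(2) by auto
  qed
  have r_cauchy: "tvs_cauchy TX r" using E(5) tel by (rule X.tvs_cauchy_nested)
  have "tvs_cauchy TX s"
    unfolding tvs_cauchy_def
  proof (intro allI impI)
    fix G assume "openin TX G \<and> 0 \<in> G"
    then obtain N where N: "\<forall>m\<ge>N. \<forall>n\<ge>N. r m - r n \<in> G" using r_cauchy unfolding tvs_cauchy_def by blast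
    have "s m - s n = r n - r m" for m n by (simp add: s_def)
    then show "\<exists>N. \<forall>m\<ge>N. \<forall>n\<ge>N. s m - s n \<in> G" using N by (intro exI[of _ N]) simp
  qed
  from X.tvs_cauchy_convergent[OF X.complete this sX]
  obtain z where z: "z \<in> X" "limitin TX s z sequentially" by blast
  have "limitin TY (\<lambda>k. r 0 - r k) (r 0 - 0) sequentially"
    using Y.limitin_diff[OF _ r(3)] r(1) Y.topspace by simp
  then have "limitin TY s (r 0) sequentially" by (simp add: s_def[abs_def])
  with fk_limitin_unique[OF X Y z(2)] have "z = r 0" .
  have "openin TX {x \<in> X. z - x \<in> E 0}"
    by (rule X.openin_preimage[OF X.continuous_map_diff_left[OF z(1)] E(1)])
  moreover have "z \<in> {x \<in> X. z - x \<in> E 0}" using z(1) E(2) by simp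
  ultimately obtain k where "z - s k \<in> E 0"
    using z(2) unfolding limitin_def eventually_sequentially by blast
  moreover have "s k \<in> E 0" using tel[of 0 0 k] by (simp add: s_def)
  moreover have "r 0 = s k + (z - s k)" using \<open>z = r 0\<close> by simp
  ultimately show ?thesis by blast
qed

text \<open>The closed graph theorem for FK-spaces.\<close>

lemma fk_inclusion_nbhd:
  assumes Y: "fk Y TY" and X: "fk X TX" and sub: "Y \<subseteq> X" and U: "openin TX U" "0 \<in> U"
  obtains W where "openin TY W" "0 \<in> W" "W \<subseteq> U"
proof -
  interpret Y: fk Y TY by (rule Y)
  interpret X: fk X TX by (rule X)
  obtain U0 where U0: "openin TX U0" "0 \<in> U0" "\<And>u v. u \<in> U0 \<Longrightarrow> v \<in> U0 \<Longrightarrow> u + v \<in> U"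
    using X.half_nbhd[OF U] by metis
  obtain E where E: "E 0 = U0" "\<And>k. openin TX (E k)" "\<And>k. 0 \<in> E k" "\<And>k. E (Suc k) \<subseteq> E k"
    "\<And>k u v. u \<in> E (Suc k) \<Longrightarrow> v \<in> E (Suc k) \<Longrightarrow> u + v \<in> E k"
    "\<And>G. openin TX G \<Longrightarrow> 0 \<in> G \<Longrightarrow> \<exists>k. E k \<subseteq> G"
    using X.nested_nbhds[OF completely_metrizable_imp_metrizable_space[OF X.complete] U0(1,2)] by metis
  obtain B :: "nat \<Rightarrow> seq set" where B: "\<And>k. openin TY (B k)" "\<And>k. 0 \<in> B k"
    "\<And>G. openin TY G \<Longrightarrow> 0 \<in> G \<Longrightarrow> \<exists>K. \<forall>k\<ge>K. B k \<subseteq> G"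
    using Y.shrinking_nbhd_base[OF completely_metrizable_imp_metrizable_space[OF Y.complete]] by metis
  have "\<exists>W. openin TY W \<and> 0 \<in> W \<and> W \<subseteq> TY closure_of (E k \<inter> Y)" for k
    using baire_nbhd_inclusion[OF Y X.seq_tvs_axioms sub E(2,3)] by metis
  then obtain W' where W': "\<And>k. openin TY (W' k)" "\<And>k. 0 \<in> W' k"
    "\<And>k. W' k \<subseteq> TY closure_of (E k \<inter> Y)"
    by metis
  define W where "W k = W' k \<inter> B k" for k
  have W: "openin TY (W k)" "0 \<in> W k" "W k \<subseteq> TY closure_of (E k \<inter> Y)" "W k \<subseteq> B k" for k
    using W'[of k] B(1,2)[of k] by (auto simp: W_def)
  have "W 1 \<subseteq> U"
  proof
    fix y assume "y \<in> W 1"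
    then obtain r where r: "r 0 = y" "\<And>k. r k \<in> W (Suc k)" "\<And>k. r k - r (Suc k) \<in> E (Suc k)"
      using Y.closure_approximation_sequence[of "\<lambda>k. W (Suc k)" "\<lambda>k. E (Suc k)"] W by auto
    have rY: "r k \<in> Y" for k using r(2) openin_subset[OF W(1)] Y.topspace by blast
    have "limitin TY r 0 sequentially"
      unfolding limitin_def
    proof (intro conjI allI impI)
      show "0 \<in> topspace TY" using Y.zero_mem Y.topspace by simp
      fix G assume "openin TY G \<and> 0 \<in> G"
      then obtain K where K: "\<forall>k\<ge>K. B k \<subseteq> G" using B(3) by blast
      have "r k \<in> G" if "k \<ge> K" for k
      proof -
        have "B (Suc k) \<subseteq> G" using K that by simp
        then show ?thesis using r(2)[of k] W(4)[of "Suc k"] by blast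
      qed
      then show "\<forall>\<^sub>F k in sequentially. r k \<in> G" unfolding eventually_sequentially by blast
    qed
    then obtain a b where "a \<in> U0" "b \<in> U0" "y = a + b"
      using approximation_limit_mem[OF Y X sub E(2-6) rY r(3)] r(1) E(1) by metis
    then show "y \<in> U" using U0(3) by simp
  qed
  then show ?thesis using that W(1,2) by blast
qed

lemma fk_inclusion_openin:
  assumes Y: "fk Y TY" and X: "fk X TX" and sub: "Y \<subseteq> X" and U: "openin TX U"
  shows "openin TY (U \<inter> Y)"
proof -
  interpret Y: fk Y TY by (rule Y)
  interpret X: fk X TX by (rule X)
  show ?thesis
  proof (subst openin_subopen, intro ballI)
    fix y assume y: "y \<in> U \<inter> Y"
    then have yX: "y \<in> X" using sub by blast
    have "openin TX {x \<in> X. y + x \<in> U}" by (rule X.openin_preimage[OF X.continuous_map_translate[OF yX] U])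
    moreover have "0 \<in> {x \<in> X. y + x \<in> U}" using y X.zero_mem by simp
    ultimately obtain W where W: "openin TY W" "0 \<in> W" "W \<subseteq> {x \<in> X. y + x \<in> U}"
      by (rule fk_inclusion_nbhd[OF Y X sub])
    have "openin TY {x \<in> Y. x - y \<in> W}"
      using y by (intro Y.openin_preimage[OF Y.continuous_map_diff_right W(1)]) simp
    moreover have "y \<in> {x \<in> Y. x - y \<in> W}" using y W(2) by simp
    moreover have "{x \<in> Y. x - y \<in> W} \<subseteq> U \<inter> Y"
    proof
      fix x assume x: "x \<in> {x \<in> Y. x - y \<in> W}"
      then have "y + (x - y) \<in> U" using W(3) by blast
      then show "x \<in> U \<inter> Y" using x by simp
    qed
    ultimately show "\<exists>N. openin TY N \<and> y \<in> N \<and> N \<subseteq> U \<inter> Y" by blast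
  qed
qed

lemma fk_inclusion_continuous:
  assumes Y: "fk Y TY" and X: "fk X TX" and sub: "Y \<subseteq> X"
  shows "continuous_map TY TX (\<lambda>x. x)"
  unfolding continuous_map_def
proof (intro conjI allI impI)
  show "(\<lambda>x. x) \<in> topspace TY \<rightarrow> topspace TX"
    using sub fk.axioms(1)[OF Y] fk.axioms(1)[OF X] by (auto simp: seq_tvs.topspace)
  fix U assume U: "openin TX U"
  have "{x \<in> topspace TY. x \<in> U} = U \<inter> Y" using fk.axioms(1)[OF Y] by (auto simp: seq_tvs.topspace)
  then show "openin TY {x \<in> topspace TY. x \<in> U}" using fk_inclusion_openin[OF Y X sub U] by simp
qed

lemma cdual_restrict:
  assumes "fk Y TY" "fk X TX" "Y \<subseteq> X" "f \<in> cdual X TX"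
  shows "f \<in> cdual Y TY"
proof -
  have f: "linear_functional_on sscale X f" "continuous_map TX euclidean f"
    using assms(4) by (simp_all add: cdual_iff)
  have "continuous_map TY euclidean f"
    using continuous_map_compose[OF fk_inclusion_continuous[OF assms(1-3)] f(2)] by (simp add: o_def)
  then show ?thesis using linear_functional_on_subset[OF f(1) assms(3)] by (simp add: cdual_iff)
qed

section \<open>The spaces \<open>DpqFplus\<close>\<close>

lemma phi_finite_support: "phi = {x. \<exists>F. finite F \<and> (\<forall>i. i \<notin> F \<longrightarrow> x i = 0)}"
proof -
  have sum_delta: "(\<Sum>j\<in>F. c j * delta j i) = (if i \<in> F then c i else 0)" if "finite F" for F c i
    using that by (simp add: delta_def if_distrib[of "\<lambda>d. c _ * d"] sum.delta cong: if_cong)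
  show ?thesis
  proof (intro set_eqI iffI)
    fix x assume "x \<in> phi"
    then obtain F c where "finite F" "x = (\<lambda>i. \<Sum>j\<in>F. c j * delta j i)" unfolding phi_def by blast
    then show "x \<in> {x. \<exists>F. finite F \<and> (\<forall>i. i \<notin> F \<longrightarrow> x i = 0)}" using sum_delta by auto
  next
    fix x :: seq assume "x \<in> {x. \<exists>F. finite F \<and> (\<forall>i. i \<notin> F \<longrightarrow> x i = 0)}"
    then obtain F where F: "finite F" "\<forall>i. i \<notin> F \<longrightarrow> x i = 0" by blast
    then have "x = (\<lambda>i. \<Sum>j\<in>F. x j * delta j i)" by (auto simp: sum_delta)
    then show "x \<in> phi" unfolding phi_def using F(1) by blast
  qed
qed

lemma delta_in_phi: "delta j \<in> phi"
  unfolding phi_finite_support by (intro CollectI exI[of _ "{j}"]) (simp add: delta_def)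

lemma seq_subspace_phi: "seq_subspace phi"
  unfolding seq_subspace_iff phi_finite_support
proof (intro conjI ballI allI)
  fix x y :: seq assume "x \<in> {x. \<exists>F. finite F \<and> (\<forall>i. i \<notin> F \<longrightarrow> x i = 0)}"
    "y \<in> {x. \<exists>F. finite F \<and> (\<forall>i. i \<notin> F \<longrightarrow> x i = 0)}"
  then obtain F G where "finite F" "\<forall>i. i \<notin> F \<longrightarrow> x i = 0" "finite G" "\<forall>i. i \<notin> G \<longrightarrow> y i = 0"
    by blast
  then show "x + y \<in> {x. \<exists>F. finite F \<and> (\<forall>i. i \<notin> F \<longrightarrow> x i = 0)}"
    by (intro CollectI exI[of _ "F \<union> G"]) simp
qed auto

lemma cdual_extend_from_phi_closure:
  assumes X: "FK_space X TX" "phi \<subseteq> X" and Y: "FK_space Y TY"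
    and sub: "TX closure_of phi \<subseteq> Y" "Y \<subseteq> X" and g: "g \<in> cdual Y TY"
  shows "\<exists>f\<in>cdual X TX. \<forall>j. f (delta j) = g (delta j)"
proof -
  interpret X: fk X TX using X(1) by (rule FK_space_imp_fk)
  have fkY: "fk Y TY" using Y by (rule FK_space_imp_fk)
  define \<Phi> where "\<Phi> = TX closure_of phi"
  have \<Phi>: "seq_subspace \<Phi>" "\<Phi> \<subseteq> X" "closedin TX \<Phi>"
    using X.seq_subspace_closure[OF seq_subspace_phi X(2)] closure_of_subset_topspace[of TX phi]
    by (simp_all add: \<Phi>_def X.topspace)
  have "fk \<Phi> (subtopology TX \<Phi>)" using X.fk_closedin_subspace[OF \<Phi>(3,1)] .
  then have "continuous_map (subtopology TX \<Phi>) TY (\<lambda>x. x)"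
    using fk_inclusion_continuous[OF _ fkY] sub by (simp add: \<Phi>_def)
  then have "continuous_map (subtopology TX \<Phi>) euclidean g"
    using continuous_map_compose[of _ _ "\<lambda>x. x" euclidean g] g by (simp add: cdual_iff o_def)
  moreover have "linear_functional_on sscale \<Phi> g"
    using g sub linear_functional_on_subset by (fastforce simp: cdual_iff \<Phi>_def)
  ultimately obtain f where "f \<in> cdual X TX" "\<forall>x\<in>\<Phi>. f x = g x"
    using X.continuous_functional_extension[OF FK_space_imp_locally_convex[OF X(1)] \<Phi>(1,2)] by blast
  moreover have "delta j \<in> \<Phi>" for j
    using closure_of_subset[of phi TX] X(2) delta_in_phi X.topspace by (auto simp: \<Phi>_def)
  ultimately show ?thesis by blast
qed

lemma DpqFplus_subset:
  assumes "\<forall>f\<in>cdual X TX. \<exists>g\<in>cdual Y TY. \<forall>j. g (delta j) = f (delta j)"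
  shows "DpqFplus p q Y TY \<subseteq> DpqFplus p q X TX"
proof
  fix x assume x: "x \<in> DpqFplus p q Y TY"
  have "convergent (\<lambda>n. (1 / of_nat (q n - p n)) * (\<Sum>k\<in>{p n<..q n}. \<Sum>j<k. x j * f (delta j)))"
    if f: "f \<in> cdual X TX" for f
  proof -
    obtain g where g: "g \<in> cdual Y TY" "\<forall>j. g (delta j) = f (delta j)" using assms f by blast
    have "convergent (\<lambda>n. (1 / of_nat (q n - p n)) * (\<Sum>k\<in>{p n<..q n}. \<Sum>j<k. x j * g (delta j)))"
      using x g(1) unfolding DpqFplus_def by blast
    then show ?thesis using g(2) by simp
  qed
  then show "x \<in> DpqFplus p q X TX" by (simp add: DpqFplus_def)
qed

theorem mainTheorem12:
  fixes p q :: "nat \<Rightarrow> nat" and X Y :: "seq set" and TX TY :: "seq topology"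
  assumes "\<forall>n. p n < q n"
    and "filterlim q at_top sequentially"
    and "FK_space X TX" and "phi \<subseteq> X"
    and "FK_space Y TY"
    and "TX closure_of phi \<subseteq> Y" and "Y \<subseteq> X"
  shows "DpqFplus p q Y TY = DpqFplus p q X TX"
proof
  have "fk X TX" "fk Y TY" using assms(3,5) by (simp_all add: FK_space_imp_fk)
  then have "\<forall>f\<in>cdual X TX. \<exists>g\<in>cdual Y TY. \<forall>j. g (delta j) = f (delta j)"
    using cdual_restrict assms(7) by blast
  then show "DpqFplus p q Y TY \<subseteq> DpqFplus p q X TX" by (rule DpqFplus_subset)
next
  have "\<forall>g\<in>cdual Y TY. \<exists>f\<in>cdual X TX. \<forall>j. f (delta j) = g (delta j)"
    using cdual_extend_from_phi_closure[OF assms(3-7)] by blast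
  then show "DpqFplus p q X TX \<subseteq> DpqFplus p q Y TY" by (rule DpqFplus_subset)
qed

end
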